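(* Let $n,m_1,m_2\ge1$ be integers, $r>0$, $D\subseteq\mathbb{R}^{m_1}$ compact, $U\subseteq\mathbb{R}^{m_2}$ locally compact with $0\in U$, $W=D\times U$, and let $f:L^\infty([-r,0);\mathbb{R}^n)\times L^\infty([-r,0];D)\times L^\infty([-r,0];U)\to\mathbb{R}^n$ satisfy: (H1) there exist non-decreasing $a,M,N:\mathbb{R}_+\to\mathbb{R}_+$ such that for every $R>0$ and all $x,y\in L^\infty([-r,0);\mathbb{R}^n)$, $w\in L^\infty([-r,0];W)$ with $\|x\|,\|y\|,\|w\|\le R$: $|f(x,w)-f(y,w)|\le N(R)h\sup_{-h\le s<0}|x(s)-y(s)|+M(R)\sup_{-r\le s<-h}|x(s)-y(s)|$ for all $h\in(0,r)$, and $|f(x,w)|\le a(R)$; (H2) for every $\delta>0$, $x\in L^\infty([-r,\delta);\mathbb{R}^n)$, $w\in L^\infty([-r,\delta];W)$, the function equal to $x$ a.e. on $[-r,0)$ and to $t\mapsto f(x_t,w_t)$ a.e. on $[0,\delta)$ belongs to $L^\infty([-r,\delta);\mathbb{R}^n)$; (H3) there exists $b\in K_\infty$ with $|f(x,d,u)|\le b(\max(\|x\|,\sup_{-r\le s\le0}|u(s)|))$ for all $x,d,u$. Assume there exist a continuous, positive definite and radially unbounded function $W:\mathbb{R}^n\to\mathbb{R}_+$, a continuous non-decreasing function $\gamma:\mathbb{R}_+\to\mathbb{R}_+$ and a constant $\lambda\in(0,1)$ such that for all $x\in L^\infty([-r,0);\mathbb{R}^n)$, $d\in L^\infty([-r,0];D)$,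 $u\in L^\infty([-r,0];U)$: $$W(f(x,d,u))\le\lambda\sup_{-r\le s<0}W(x(s))+\gamma(\|u\|).$$ Then the system $x(t)=f(x_t,d_t,u_t)$ is ISS from the input $u\in U$ uniformly in $d\in D$.
   Context: Notation: $\mathbb{R}_+=[0,\infty)$; $L^\infty$, $L^\infty_{loc}$ are spaces of (locally) essentially bounded measurable functions; $\|x\|$ is the essential supremum of the Euclidean norm and $\sup_{a\le s<b}$ means essential supremum; $x_t(s)=x(t+s)$, $s\in[-r,0)$, and $d_t,u_t$ similarly on $[-r,0]$. $K_\infty$: continuous, strictly increasing, zero at zero, unbounded functions $\mathbb{R}_+\to\mathbb{R}_+$. A solution with initial condition $x_0$ and inputs $d,u$ on $[0,T)$ is $x\in L^\infty_{loc}([-r,T);\mathbb{R}^n)$ with $x=x_0$ a.e. on $[-r,0)$ and $x(t)=f(x_t,d_t,u_t)$ for a.e. $t\in[0,T)$; under (H1),(H2) there is a unique maximally defined one, called the solution. Definition (ISS). The system is ISS from the input $u$ uniformly in $d$ if for every $x_0\in L^\infty([-r,0);\mathbb{R}^n)$, $d\in L^\infty([-r,+\infty);D)$, $u\in L^\infty_{loc}([-r,+\infty);U)$ the solution exists on $[0,+\infty)$, and there exists a continuous non-decreasing $\tilde\gamma:\mathbb{R}_+\to\mathbb{R}_+$ such that (all suprema over such $d,u$): for every $\varepsilon>0$, $\sup\{\|x_t\|-\sup_{0\le s\le t}\tilde\gamma(\|u_s\|):t\ge0,\|x_0\|\le\varepsilon\}<+\infty$; for every $\varepsilon>0$ there is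 $\delta>0$ with $\sup\{\|x_t\|-\sup_{0\le s\le t}\tilde\gamma(\|u_s\|):t\ge0,\|x_0\|\le\delta\}<\varepsilon$; for every $\varepsilon>0$, $R\ge0$ there is $\tau>0$ with $\sup\{\|x_t\|-\sup_{0\le s\le t}\tilde\gamma(\|u_s\|):t\ge\tau,\|x_0\|\le R\}<\varepsilon$. *)

theory Defs
  imports "HOL-Analysis.Analysis"
begin

text \<open>Used only for nonnegative, essentially bounded functions on sets of positive measure,
  where it coincides with the usual essential supremum.\<close>
definition ess_sup_on :: "real set \<Rightarrow> (real \<Rightarrow> real) \<Rightarrow> real" where
  "ess_sup_on S g = Inf {c. 0 \<le> c \<and> (AE s in lebesgue. s \<in> S \<longrightarrow> g s \<le> c)}"

definition Lnorm :: "real set \<Rightarrow> (real \<Rightarrow> 'a::real_normed_vector) \<Rightarrow> real" where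
  "Lnorm S g = ess_sup_on S (\<lambda>s. norm (g s))"

definition Linf :: "real set \<Rightarrow> 'a::euclidean_space set \<Rightarrow> (real \<Rightarrow> 'a) \<Rightarrow> bool" where
  "Linf S X g \<longleftrightarrow> set_borel_measurable lebesgue S g \<and>
     (\<exists>B. AE s in lebesgue. s \<in> S \<longrightarrow> g s \<in> X \<and> norm (g s) \<le> B)"

definition Linf_loc :: "real \<Rightarrow> 'a::euclidean_space set \<Rightarrow> (real \<Rightarrow> 'a) \<Rightarrow> bool" where
  "Linf_loc a X g \<longleftrightarrow> (\<forall>T>a. Linf {a..T} X g)"

definition shift :: "(real \<Rightarrow> 'a) \<Rightarrow> real \<Rightarrow> real \<Rightarrow> 'a" where
  "shift x t = (\<lambda>s. x (t + s))"

definition Kinf :: "(real \<Rightarrow> real) \<Rightarrow> bool" where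
  "Kinf b \<longleftrightarrow> continuous_on {0..} b \<and> strict_mono_on {0..} b \<and> b 0 = 0 \<and>
     (\<forall>s\<ge>0. 0 \<le> b s) \<and> filterlim b at_top at_top"

definition nondecr_nonneg :: "(real \<Rightarrow> real) \<Rightarrow> bool" where
  "nondecr_nonneg a \<longleftrightarrow> mono_on {0..} a \<and> (\<forall>s\<ge>0. 0 \<le> a s)"

definition is_solution_inf ::
  "real \<Rightarrow> ((real \<Rightarrow> 'n::euclidean_space) \<Rightarrow> (real \<Rightarrow> 'd) \<Rightarrow> (real \<Rightarrow> 'u) \<Rightarrow> 'n)
   \<Rightarrow> (real \<Rightarrow> 'n) \<Rightarrow> (real \<Rightarrow> 'd) \<Rightarrow> (real \<Rightarrow> 'u) \<Rightarrow> (real \<Rightarrow> 'n) \<Rightarrow> bool" where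
  "is_solution_inf r f x0 d u x \<longleftrightarrow>
     Linf_loc (-r) UNIV x \<and>
     (AE s in lebesgue. s \<in> {-r..<0} \<longrightarrow> x s = x0 s) \<and>
     (AE t in lebesgue. 0 \<le> t \<longrightarrow> x t = f (shift x t) (shift d t) (shift u t))"

definition ISS ::
  "real \<Rightarrow> ((real \<Rightarrow> 'n::euclidean_space) \<Rightarrow> (real \<Rightarrow> 'd::euclidean_space) \<Rightarrow> (real \<Rightarrow> 'u::euclidean_space) \<Rightarrow> 'n)
   \<Rightarrow> 'd set \<Rightarrow> 'u set \<Rightarrow> bool" where
  "ISS r f D U \<longleftrightarrow>
    (let adm = (\<lambda>x0 d u. Linf {-r..<0} UNIV x0 \<and> Linf {-r..} D d \<and> Linf_loc (-r) U u);
         dev = (\<lambda>g x u t. Lnorm {-r..<0} (shift x t) - (SUP s\<in>{0..t}. g (Lnorm {-r..0} (shift u s))))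
     in (\<forall>x0 d u. adm x0 d u \<longrightarrow> (\<exists>x. is_solution_inf r f x0 d u x)) \<and>
        (\<exists>g. continuous_on {0..} g \<and> nondecr_nonneg g \<and>
          (\<forall>\<epsilon>>0. \<exists>C. \<forall>x0 d u x t. adm x0 d u \<and> is_solution_inf r f x0 d u x \<and>
                Lnorm {-r..<0} x0 \<le> \<epsilon> \<and> 0 \<le> t \<longrightarrow> dev g x u t \<le> C) \<and>
          (\<forall>\<epsilon>>0. \<exists>\<delta>>0. \<exists>c<\<epsilon>. \<forall>x0 d u x t. adm x0 d u \<and> is_solution_inf r f x0 d u x \<and>
                Lnorm {-r..<0} x0 \<le> \<delta> \<and> 0 \<le> t \<longrightarrow> dev g x u t \<le> c) \<and>
          (\<forall>\<epsilon>>0. \<forall>R\<ge>0. \<exists>\<tau>>0. \<exists>c<\<epsilon>. \<forall>x0 d u x t. adm x0 d u \<and> is_solution_inf r f x0 d u x \<and>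
                Lnorm {-r..<0} x0 \<le> R \<and> \<tau> \<le> t \<longrightarrow> dev g x u t \<le> c)))"

end

theory Submission
  imports Defs
begin

text \<open>Along a solution, \<open>V (x t) \<le> lam * ess sup {V (x s) | s \<in> [t - r, t)} + \<gamma> \<parallel>u\<^sub>t\<parallel>\<close>.
  Hence every shift of the window by the delay r contracts the essential supremum of \<open>V \<circ> x\<close>
  by the factor lam up to the input term: over \<open>[k r - r, t)\<close> it is at most
  \<open>lam^k sup V (x\<^sub>0) + \<gamma> / (1 - lam)\<close>. Passing from sublevel sets of V back to norms gives the
  ISS estimate, the gain being a continuous nondecreasing majorant of
  \<open>c \<mapsto> sublevel_radius (2 \<gamma> c / (1 - lam))\<close>.
  Solutions are obtained by Picard iteration in a sublevel set of V, which the same inequality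
  keeps invariant; by (H1) the iteration contracts for a sup norm with an exponential weight,
  which damps the part of the history older than a short lag h.\<close>

section \<open>Essential suprema and bounded measurable functions\<close>

definition ess_bdd_above_on :: "real set \<Rightarrow> (real \<Rightarrow> real) \<Rightarrow> bool" where
  "ess_bdd_above_on S g \<longleftrightarrow> (\<exists>c. AE s in lebesgue. s \<in> S \<longrightarrow> g s \<le> c)"

lemma ess_bdd_above_onE:
  assumes "ess_bdd_above_on S g"
  obtains c where "0 \<le> c" "AE s in lebesgue. s \<in> S \<longrightarrow> g s \<le> c"
proof -
  obtain c where "AE s in lebesgue. s \<in> S \<longrightarrow> g s \<le> c"
    using assms unfolding ess_bdd_above_on_def by auto
  then have "AE s in lebesgue. s \<in> S \<longrightarrow> g s \<le> max c 0"
    by eventually_elim auto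
  then show thesis by (intro that[of "max c 0"]) auto
qed

lemma ess_bdd_above_on_subset:
  "ess_bdd_above_on S' g \<Longrightarrow> S \<subseteq> S' \<Longrightarrow> ess_bdd_above_on S g"
  unfolding ess_bdd_above_on_def by (auto elim!: eventually_mono)

lemma ess_sup_on_le:
  assumes "0 \<le> c" "AE s in lebesgue. s \<in> S \<longrightarrow> g s \<le> c"
  shows "ess_sup_on S g \<le> c"
  unfolding ess_sup_on_def using assms
  by (intro cInf_lower) (auto intro: bdd_belowI[of _ 0])

lemma ess_sup_on_nonneg: "ess_bdd_above_on S g \<Longrightarrow> 0 \<le> ess_sup_on S g"
  unfolding ess_sup_on_def by (rule cInf_greatest) (auto elim: ess_bdd_above_onE)

lemma AE_le_ess_sup_on:
  assumes "ess_bdd_above_on S g"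
  shows "AE s in lebesgue. s \<in> S \<longrightarrow> g s \<le> ess_sup_on S g"
proof -
  let ?C = "{c. 0 \<le> c \<and> (AE s in lebesgue. s \<in> S \<longrightarrow> g s \<le> c)}"
  have C: "?C \<noteq> {}" "bdd_below ?C"
    using assms by (auto elim: ess_bdd_above_onE intro: bdd_belowI[of _ 0])
  have "AE s in lebesgue. s \<in> S \<longrightarrow> g s \<le> ess_sup_on S g + 1 / real (Suc n)" for n
  proof -
    have "Inf ?C < ess_sup_on S g + 1 / real (Suc n)" by (simp add: ess_sup_on_def)
    then obtain c where "c \<in> ?C" "c < ess_sup_on S g + 1 / real (Suc n)"
      using cInf_less_iff[OF C] by auto
    then show ?thesis by (auto elim!: eventually_mono)
  qed
  then have "AE s in lebesgue. \<forall>n. s \<in> S \<longrightarrow> g s \<le> ess_sup_on S g + 1 / real (Suc n)"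
    by (subst AE_all_countable) auto
  then show ?thesis
  proof eventually_elim
    case (elim s)
    show ?case
    proof
      assume "s \<in> S"
      show "g s \<le> ess_sup_on S g"
      proof (rule ccontr)
        assume "\<not> g s \<le> ess_sup_on S g"
        then obtain n where "1 / real (Suc n) < g s - ess_sup_on S g"
          using reals_Archimedean[of "g s - ess_sup_on S g"]
          by (auto simp: field_simps inverse_eq_divide)
        moreover have "g s \<le> ess_sup_on S g + 1 / real (Suc n)" using elim \<open>s \<in> S\<close> by blast
        ultimately show False by linarith
      qed
    qed
  qed
qed

lemma ess_sup_on_subset_mono:
  assumes "ess_bdd_above_on S' g" "S \<subseteq> S'"
  shows "ess_sup_on S g \<le> ess_sup_on S' g"
proof (rule ess_sup_on_le)
  show "AE s in lebesgue. s \<in> S \<longrightarrow> g s \<le> ess_sup_on S' g"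
    using AE_le_ess_sup_on[OF assms(1)] assms(2) by (auto elim!: eventually_mono)
qed (rule ess_sup_on_nonneg[OF assms(1)])

lemma AE_lebesgue_translate:
  assumes "AE x in lebesgue. P x"
  shows "AE s in lebesgue. P ((t::real) + s)"
proof -
  have T: "(\<lambda>x::real. t + x) \<in> lebesgue \<rightarrow>\<^sub>M lebesgue"
    using lebesgue_affine_measurable[where c="\<lambda>_::real. 1" and t=t] by simp
  from assms obtain N where N: "{x \<in> space lebesgue. \<not> P x} \<subseteq> N" "emeasure lebesgue N = 0"
      "N \<in> sets lebesgue"
    by (auto elim!: AE_E)
  have "lebesgue = density (distr lebesgue lebesgue (\<lambda>x::real. t + 1 * x)) (\<lambda>_. ennreal \<bar>1\<bar>)"
    by (rule lebesgue_real_affine) simp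
  then have "lebesgue = distr lebesgue lebesgue (\<lambda>x::real. t + x)"
    by (simp add: density_1)
  then have "emeasure lebesgue N = emeasure lebesgue ((\<lambda>x. t + x) -` N \<inter> space lebesgue)"
    using emeasure_distr[OF T N(3)] by metis
  then have "emeasure lebesgue ((\<lambda>x. t + x) -` N) = 0" using N by simp
  moreover have "(\<lambda>x. t + x) -` N \<in> sets lebesgue"
    using measurable_sets[OF T N(3)] by simp
  ultimately show ?thesis
    by (intro AE_I[where N="(\<lambda>x. t + x) -` N"]) (use N in auto)
qed

lemma AE_shift:
  assumes "AE s in lebesgue. s \<in> S \<longrightarrow> P (g s)" "\<And>s. s \<in> S' \<Longrightarrow> t + s \<in> S"
  shows "AE s in lebesgue. s \<in> S' \<longrightarrow> P (shift g t s)"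
  using AE_lebesgue_translate[OF assms(1), of t] assms(2)
  by (auto simp: shift_def elim!: eventually_mono)

lemma ess_sup_on_translate_le:
  assumes "ess_bdd_above_on S g" "\<And>\<sigma>. \<sigma> \<in> S' \<Longrightarrow> t + \<sigma> \<in> S"
  shows "ess_sup_on S' (\<lambda>\<sigma>. g (t + \<sigma>)) \<le> ess_sup_on S g"
proof (rule ess_sup_on_le)
  show "AE \<sigma> in lebesgue. \<sigma> \<in> S' \<longrightarrow> g (t + \<sigma>) \<le> ess_sup_on S g"
    using AE_lebesgue_translate[OF AE_le_ess_sup_on[OF assms(1)], of t]
    by (rule eventually_mono) (use assms(2) in auto)
qed (rule ess_sup_on_nonneg[OF assms(1)])

lemma Linf_shift:
  fixes g :: "real \<Rightarrow> 'a::euclidean_space"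
  assumes g: "Linf S X g" and S': "S' \<in> sets lebesgue" and sub: "\<And>s. s \<in> S' \<Longrightarrow> t + s \<in> S"
  shows "Linf S' X (shift g t)"
proof -
  have T: "(\<lambda>s::real. t + s) \<in> lebesgue \<rightarrow>\<^sub>M lebesgue"
    using lebesgue_affine_measurable[where c="\<lambda>_::real. 1" and t=t] by simp
  have "(\<lambda>s. indicator S s *\<^sub>R g s) \<in> borel_measurable lebesgue"
    using g unfolding Linf_def set_borel_measurable_def by auto
  from measurable_compose[OF T this]
  have "(\<lambda>s. indicator S (t + s) *\<^sub>R g (t + s)) \<in> borel_measurable lebesgue"
    by (simp add: o_def)
  then have "(\<lambda>s. indicator S' s *\<^sub>R (indicator S (t + s) *\<^sub>R g (t + s))) \<in> borel_measurable lebesgue"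
    using S' by measurable
  moreover have "(\<lambda>s. indicator S' s *\<^sub>R (indicator S (t + s) *\<^sub>R g (t + s)))
      = (\<lambda>s. indicator S' s *\<^sub>R shift g t s)"
    using sub by (auto simp: shift_def indicator_def fun_eq_iff)
  moreover obtain B where "AE s in lebesgue. s \<in> S \<longrightarrow> g s \<in> X \<and> norm (g s) \<le> B"
    using g unfolding Linf_def by auto
  then have "AE s in lebesgue. s \<in> S' \<longrightarrow> shift g t s \<in> X \<and> norm (shift g t s) \<le> B"
    using sub by (rule AE_shift[where P="\<lambda>z. z \<in> X \<and> norm z \<le> B"])
  ultimately show ?thesis unfolding Linf_def set_borel_measurable_def by auto
qed

lemma Linf_subset: "Linf S X g \<Longrightarrow> S' \<in> sets lebesgue \<Longrightarrow> S' \<subseteq> S \<Longrightarrow> Linf S' X g"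
  using Linf_shift[of S X g S' 0] by (auto simp: shift_def)

lemma LinfE:
  assumes "Linf S X g"
  obtains B where "0 \<le> B" "AE s in lebesgue. s \<in> S \<longrightarrow> g s \<in> X \<and> norm (g s) \<le> B"
proof -
  obtain B where "AE s in lebesgue. s \<in> S \<longrightarrow> g s \<in> X \<and> norm (g s) \<le> B"
    using assms unfolding Linf_def by auto
  then have "AE s in lebesgue. s \<in> S \<longrightarrow> g s \<in> X \<and> norm (g s) \<le> max B 0"
    by eventually_elim auto
  then show thesis by (intro that[of "max B 0"]) auto
qed

lemma Linf_imp_ess_bdd_above_on: "Linf S X g \<Longrightarrow> ess_bdd_above_on S (\<lambda>s. norm (g s))"
  unfolding ess_bdd_above_on_def by (erule LinfE) (auto elim!: eventually_mono)

lemma Lnorm_le: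
  "0 \<le> c \<Longrightarrow> AE s in lebesgue. s \<in> S \<longrightarrow> norm (g s) \<le> c \<Longrightarrow> Lnorm S g \<le> c"
  unfolding Lnorm_def by (rule ess_sup_on_le)

lemma Lnorm_nonneg: "Linf S X g \<Longrightarrow> 0 \<le> Lnorm S g"
  unfolding Lnorm_def by (rule ess_sup_on_nonneg[OF Linf_imp_ess_bdd_above_on])

lemma AE_norm_le_Lnorm:
  "Linf S X g \<Longrightarrow> AE s in lebesgue. s \<in> S \<longrightarrow> norm (g s) \<le> Lnorm S g"
  unfolding Lnorm_def by (rule AE_le_ess_sup_on[OF Linf_imp_ess_bdd_above_on])

lemma LinfI:
  assumes "g \<in> borel_measurable lebesgue" "S \<in> sets lebesgue"
    "AE s in lebesgue. s \<in> S \<longrightarrow> g s \<in> X \<and> norm (g s) \<le> B"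
  shows "Linf S X g"
  unfolding Linf_def set_borel_measurable_def using assms by (auto intro!: borel_measurable_scaleR)

lemma Linf_AE_eq:
  assumes "Linf S X g" "h \<in> borel_measurable lebesgue" "S \<in> sets lebesgue"
    "AE s in lebesgue. s \<in> S \<longrightarrow> h s = g s"
  shows "Linf S X h"
proof -
  obtain B where "AE s in lebesgue. s \<in> S \<longrightarrow> g s \<in> X \<and> norm (g s) \<le> B"
    using assms(1) unfolding Linf_def by blast
  with assms(4) have "AE s in lebesgue. s \<in> S \<longrightarrow> h s \<in> X \<and> norm (h s) \<le> B"
    by eventually_elim auto
  with assms(2,3) show ?thesis by (rule LinfI)
qed

lemma Lnorm_shift_le:
  assumes "AE s in lebesgue. s \<in> S \<longrightarrow> norm (g s) \<le> c" "0 \<le> c" "\<And>s. s \<in> S' \<Longrightarrow> t + s \<in> S"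
  shows "Lnorm S' (shift g t) \<le> c"
  using AE_shift[where P="\<lambda>z. norm z \<le> c", OF assms(1,3)] assms(2) by (intro Lnorm_le)

lemma AE_diff_le_exp_before:
  fixes y z :: "real \<Rightarrow> 'a::real_normed_vector"
  assumes eq: "AE s in lebesgue. s \<in> {a..<0} \<longrightarrow> y s = z s"
    and diff: "AE s in lebesgue. s \<in> {0..<T} \<longrightarrow> norm (y s - z s) \<le> c * exp (\<beta> * s)"
    and "0 \<le> c" "0 \<le> \<beta>"
  shows "AE s in lebesgue. s \<in> {a..<T} \<and> s \<le> s0 \<longrightarrow> norm (y s - z s) \<le> c * exp (\<beta> * s0)"
  using eq diff
proof eventually_elim
  case (elim s)
  show ?case
  proof
    assume s: "s \<in> {a..<T} \<and> s \<le> s0"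
    show "norm (y s - z s) \<le> c * exp (\<beta> * s0)"
    proof (cases "s < 0")
      case True
      with elim s \<open>0 \<le> c\<close> show ?thesis by simp
    next
      case False
      with elim s have "norm (y s - z s) \<le> c * exp (\<beta> * s)" by simp
      also have "\<dots> \<le> c * exp (\<beta> * s0)"
        using s assms(3,4) by (intro mult_left_mono) (auto intro: mult_left_mono)
      finally show ?thesis .
    qed
  qed
qed

section \<open>Geometric convergence and monotone majorants\<close>

lemma geometric_steps_convergent:
  fixes a :: "nat \<Rightarrow> 'a::banach"
  assumes step: "\<And>j. norm (a (Suc j) - a j) \<le> K * (1/2)^j"
  shows "a \<longlonglongrightarrow> lim a" and "norm (lim a - a j) \<le> 2 * K * (1/2)^j"
proof -
  let ?b = "\<lambda>j. a (Suc j) - a j"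
  have geo: "summable (\<lambda>i. K * (1/2::real)^i)"
    by (intro summable_mult summable_geometric) simp
  have b: "summable ?b"
    using step by (intro summable_comparison_test'[OF geo]) auto
  have "(\<lambda>n. a 0 + (\<Sum>j<n. ?b j)) \<longlonglongrightarrow> a 0 + suminf ?b"
    by (intro tendsto_add tendsto_const summable_LIMSEQ b)
  then have "a \<longlonglongrightarrow> a 0 + suminf ?b" by (simp add: sum_lessThan_telescope)
  then show "a \<longlonglongrightarrow> lim a" by (simp add: limI)
  then have "lim a = a 0 + suminf ?b" using \<open>a \<longlonglongrightarrow> a 0 + suminf ?b\<close> LIMSEQ_unique by blast
  also have "\<dots> = a j + (\<Sum>i. ?b (i + j))"
    by (simp add: suminf_split_initial_segment[OF b, of j] sum_lessThan_telescope)
  finally have "norm (lim a - a j) = norm (\<Sum>i. ?b (i + j))" by simp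
  also have "\<dots> \<le> (\<Sum>i. K * (1/2)^j * (1/2)^i)"
    using step[of "_ + j"] by (intro norm_suminf_le summable_mult summable_geometric)
      (auto simp: power_add mult_ac)
  also have "\<dots> = 2 * K * (1/2)^j"
    by (simp add: suminf_mult suminf_geometric)
  finally show "norm (lim a - a j) \<le> 2 * K * (1/2)^j" .
qed

lemma nonpos_if_le_geometric:
  assumes "\<And>j. x \<le> K * (1/2::real)^j"
  shows "x \<le> 0"
proof -
  have "(\<lambda>j. K * (1/2::real)^j) \<longlonglongrightarrow> K * 0"
    by (intro tendsto_mult tendsto_const LIMSEQ_power_zero) auto
  then show ?thesis using assms by (intro LIMSEQ_le_const[of _ 0]) auto
qed

lemma AE_geometric_steps_convergent:
  fixes y :: "nat \<Rightarrow> real \<Rightarrow> 'a::banach"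
  assumes "\<And>j. AE s in M. s \<in> S \<longrightarrow> norm (y (Suc j) s - y j s) \<le> K s * (1/2)^j"
  shows "AE s in M. s \<in> S \<longrightarrow> (\<lambda>j. y j s) \<longlonglongrightarrow> lim (\<lambda>j. y j s) \<and>
           (\<forall>j. norm (lim (\<lambda>j. y j s) - y j s) \<le> 2 * K s * (1/2)^j)"
proof -
  have "AE s in M. \<forall>j. s \<in> S \<longrightarrow> norm (y (Suc j) s - y j s) \<le> K s * (1/2)^j"
    using assms by (subst AE_all_countable) auto
  then show ?thesis
    by eventually_elim (auto intro: geometric_steps_convergent[where a="\<lambda>j. y j _"])
qed

lemma lim_eventually_eq: "eventually (\<lambda>m. a m = c) sequentially \<Longrightarrow> lim a = c"
  by (intro limI tendsto_eventually)

lemma set_borel_measurable_lim: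
  fixes y :: "nat \<Rightarrow> 'b \<Rightarrow> 'a::{banach, second_countable_topology}"
  assumes "\<And>j. set_borel_measurable M S (y j)"
  shows "set_borel_measurable M S (\<lambda>s. lim (\<lambda>j. y j s))"
proof -
  have "(\<lambda>s. lim (\<lambda>j. indicator S s *\<^sub>R y j s)) \<in> borel_measurable M"
    using assms unfolding set_borel_measurable_def by (rule borel_measurable_lim_metric)
  moreover have "lim (\<lambda>j. indicator S s *\<^sub>R y j s) = indicator S s *\<^sub>R lim (\<lambda>j. y j s)" for s
    by (cases "s \<in> S") (simp_all add: lim_eventually_eq)
  ultimately show ?thesis by (simp add: set_borel_measurable_def)
qed

lemma AE_lim_of_consistent:
  fixes y :: "nat \<Rightarrow> 'b \<Rightarrow> 'a::real_normed_vector"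
  assumes S: "incseq S" and agree: "\<And>n m. n \<le> m \<Longrightarrow> AE s in M. s \<in> S n \<longrightarrow> y m s = y n s"
  shows "AE s in M. \<forall>n. s \<in> S n \<longrightarrow> lim (\<lambda>m. indicator (S m) s *\<^sub>R y m s) = y n s"
proof -
  have "AE s in M. \<forall>n m. n \<le> m \<longrightarrow> s \<in> S n \<longrightarrow> y m s = y n s"
    using agree by (subst AE_all_countable, intro allI, subst AE_all_countable) auto
  then show ?thesis
  proof eventually_elim
    case (elim s)
    have "lim (\<lambda>m. indicator (S m) s *\<^sub>R y m s) = y n s" if "s \<in> S n" for n
      using elim that S unfolding incseq_def
      by (intro lim_eventually_eq eventually_sequentiallyI[of n]) (auto simp: subset_eq)
    then show ?case by blast
  qed
qed

lemma continuous_mono_majorant: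
  fixes \<rho> :: "real \<Rightarrow> real"
  assumes mono: "mono_on {0..} \<rho>" and nonneg: "\<And>c. 0 \<le> c \<Longrightarrow> 0 \<le> \<rho> c"
  obtains g where "continuous_on {0..} g" "nondecr_nonneg g" "\<And>c. 0 \<le> c \<Longrightarrow> \<rho> c \<le> g c"
proof -
  define p where "p c = \<rho> (max c 0)" for c
  have p: "mono p" using mono unfolding p_def mono_def mono_on_def by auto
  have int: "p integrable_on {a..b}" for a b
    using p by (intro integrable_on_mono_on) (auto simp: mono_on_def mono_def)
  define I where "I x = integral {-1..x} p" for x
  define g where "g c = integral {c..c+1} p" for c
  \<comment> \<open>averaging the monotone function over a window of length one makes it continuous\<close>
  have g_I: "g x = I (x + 1) - I x" if "-1 \<le> x" for x
    using Henstock_Kurzweil_Integration.integral_combine[where a="-1" and c=x and b="x+1" and f=p] that int by (simp add: g_def I_def)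
  have I: "isCont I x" if "-1 < x" for x
  proof -
    have "continuous_on {-1..x+1} I" unfolding I_def by (rule indefinite_integral_continuous_1[OF int])
    then show ?thesis using that by (intro continuous_on_interior[of "{-1..x+1}"]) auto
  qed
  have "continuous_on {0..} (\<lambda>x. I (x + 1) - I x)"
    using I by (intro continuous_at_imp_continuous_on ballI continuous_intros
        isCont_o2[where f="\<lambda>x. x + 1" and g=I]) auto
  then have "continuous_on {0..} g" by (rule continuous_on_cong[THEN iffD1, rotated 2]) (auto simp: g_I)
  moreover have p_le_g: "p c \<le> g c" for c
    using integral_le[of "\<lambda>_. p c" "{c..c+1}" p] int p by (auto simp: g_def mono_def)
  moreover have "g c \<le> g c'" if "c \<le> c'" for c c'
  proof -
    have "g c = integral {0..1} (p \<circ> (+) c)"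
      using integral_shift_Icc_real[of 0 1 p c] by (simp add: g_def add.commute)
    also have "\<dots> \<le> integral {0..1} (p \<circ> (+) c')"
      using p that by (intro integral_le integrable_on_mono_on) (auto simp: mono_on_def mono_def)
    also have "\<dots> = g c'"
      using integral_shift_Icc_real[of 0 1 p c'] by (simp add: g_def add.commute)
    finally show ?thesis .
  qed
  moreover have "0 \<le> g c" for c
    using nonneg p_le_g[of c] by (smt (verit) p_def max.cobounded2)
  moreover have "\<rho> c \<le> g c" if "0 \<le> c" for c
    using p_le_g[of c] that by (simp add: p_def)
  ultimately show thesis
    by (intro that[of g]) (auto simp: nondecr_nonneg_def mono_on_def)
qed

lemma continuous_on_mono_on_Sup:
  fixes g :: "real \<Rightarrow> real"
  assumes g: "continuous_on {0..} g" "mono_on {0..} g"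
    and S: "S \<subseteq> {0..}" "S \<noteq> {}" "bdd_above S"
  shows "g (Sup S) = (SUP s\<in>S. g s)"
proof -
  define G where "G x = g (max x 0)" for x
  have "continuous_on UNIV G"
    unfolding G_def by (intro continuous_on_compose2[OF g(1)] continuous_intros) auto
  then have cont: "continuous (at_left (Sup S)) G"
    by (simp add: continuous_on_eq_continuous_at continuous_at_imp_continuous_at_within)
  have "mono G"
    unfolding G_def mono_def by (auto intro!: mono_onD[OF g(2)])
  from continuous_at_Sup_mono[OF this cont S(2,3)]
  have "G (Sup S) = (SUP s\<in>S. G s)" .
  moreover obtain s where "s \<in> S" using S(2) by blast
  then have "0 \<le> Sup S" using S cSup_upper[of s S] by auto
  moreover have "(SUP s\<in>S. G s) = (SUP s\<in>S. g s)"
    using S(1) by (intro SUP_cong) (auto simp: G_def)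
  ultimately show ?thesis by (simp add: G_def)
qed

lemma mono_on_add_le:
  fixes \<rho> :: "real \<Rightarrow> real"
  assumes mono: "mono_on {0..} \<rho>" and nonneg: "\<And>c. 0 \<le> c \<Longrightarrow> 0 \<le> \<rho> c"
    and "0 \<le> a" "0 \<le> b"
  shows "\<rho> (a + b) \<le> \<rho> (2 * a) + \<rho> (2 * b)"
proof -
  have "\<rho> (a + b) \<le> \<rho> (2 * max a b)"
    using assms by (intro mono_onD[OF mono]) auto
  also have "\<dots> \<le> \<rho> (2 * a) + \<rho> (2 * b)"
    using assms nonneg[of "2 * a"] nonneg[of "2 * b"] by (auto simp: max_def)
  finally show ?thesis .
qed

section \<open>A delayed dissipation inequality\<close>

context
  fixes r lam \<Gamma> S t :: real and v :: "real \<Rightarrow> real"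
  assumes r: "0 < r" and lam: "0 \<le> lam" "lam < 1" and \<Gamma>: "0 \<le> \<Gamma>" and S: "0 \<le> S"
    and bdd: "ess_bdd_above_on {-r..t} v"
    and init: "AE s in lebesgue. s \<in> {-r..<0} \<longrightarrow> v s \<le> S"
    and dissipation: "AE s in lebesgue. s \<in> {0..<t} \<longrightarrow> v s \<le> lam * ess_sup_on {s-r..<s} v + \<Gamma>"
begin

lemma AE_dissipation_on:
  assumes A: "A \<subseteq> {-r..t}"
  shows "AE s in lebesgue. s \<in> {0..<t} \<longrightarrow> {s-r..<s} \<subseteq> A \<longrightarrow> v s \<le> lam * ess_sup_on A v + \<Gamma>"
  using dissipation
proof (rule eventually_mono, intro impI)
  fix s assume "s \<in> {0..<t} \<longrightarrow> v s \<le> lam * ess_sup_on {s-r..<s} v + \<Gamma>"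
    and "s \<in> {0..<t}" and sub: "{s-r..<s} \<subseteq> A"
  then have "v s \<le> lam * ess_sup_on {s-r..<s} v + \<Gamma>" by blast
  moreover have "lam * ess_sup_on {s-r..<s} v \<le> lam * ess_sup_on A v"
    using ess_sup_on_subset_mono[OF ess_bdd_above_on_subset[OF bdd A] sub] lam
    by (intro mult_left_mono) auto
  ultimately show "v s \<le> lam * ess_sup_on A v + \<Gamma>" by linarith
qed

lemma ess_sup_on_initial_bound: "ess_sup_on {-r..<t} v \<le> S + \<Gamma> / (1 - lam)"
proof -
  define Q where "Q = ess_sup_on {-r..<t} v"
  have pointwise: "s \<in> {-r..<t} \<longrightarrow> v s \<le> max S (lam * Q + \<Gamma>)"
    if "s \<in> {0..<t} \<longrightarrow> {s-r..<s} \<subseteq> {-r..<t} \<longrightarrow> v s \<le> lam * Q + \<Gamma>"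
      and "s \<in> {-r..<0} \<longrightarrow> v s \<le> S" for s
  proof
    assume s: "s \<in> {-r..<t}"
    show "v s \<le> max S (lam * Q + \<Gamma>)"
    proof (cases "s < 0")
      case True
      with s have "s \<in> {-r..<0}" by simp
      with that(2) have "v s \<le> S" by blast
      then show ?thesis by simp
    next
      case False
      with s have "s \<in> {0..<t}" by auto
      have "{s-r..<s} \<subseteq> {-r..<t}" using False s by auto
      with that(1) \<open>s \<in> {0..<t}\<close> have "v s \<le> lam * Q + \<Gamma>" by blast
      then show ?thesis by simp
    qed
  qed
  have "{-r..<t} \<subseteq> {-r..t}" by auto
  from AE_dissipation_on[OF this, folded Q_def] init
  have "AE s in lebesgue. s \<in> {-r..<t} \<longrightarrow> v s \<le> max S (lam * Q + \<Gamma>)"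
    by (rule eventually_elim2) (rule pointwise)
  then have "Q \<le> max S (lam * Q + \<Gamma>)"
    using S unfolding Q_def by (intro ess_sup_on_le) auto
  moreover have "Q \<le> \<Gamma> / (1 - lam)" if "Q \<le> lam * Q + \<Gamma>"
  proof -
    have "(1 - lam) * Q \<le> \<Gamma>" using that by (simp add: algebra_simps)
    then show ?thesis using lam by (simp add: pos_le_divide_eq mult.commute)
  qed
  moreover have "0 \<le> \<Gamma> / (1 - lam)" using \<Gamma> lam by (intro divide_nonneg_nonneg) auto
  ultimately have "Q \<le> S + \<Gamma> / (1 - lam)" using S by (auto simp: le_max_iff_disj)
  then show ?thesis by (simp add: Q_def)
qed

lemma ess_sup_on_delay_step:
  assumes a: "-r \<le> a"
  shows "ess_sup_on {a+r..<t} v \<le> lam * ess_sup_on {a..<t} v + \<Gamma>"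
proof (rule ess_sup_on_le)
  have "{a..<t} \<subseteq> {-r..t}" using a by auto
  then show "0 \<le> lam * ess_sup_on {a..<t} v + \<Gamma>"
    using lam \<Gamma> ess_sup_on_nonneg[OF ess_bdd_above_on_subset[OF bdd]] by simp
  show "AE s in lebesgue. s \<in> {a+r..<t} \<longrightarrow> v s \<le> lam * ess_sup_on {a..<t} v + \<Gamma>"
    using AE_dissipation_on[OF \<open>{a..<t} \<subseteq> {-r..t}\<close>]
  proof (rule eventually_mono, intro impI)
    fix s assume s: "s \<in> {a+r..<t}"
    then have "s \<in> {0..<t}" "{s-r..<s} \<subseteq> {a..<t}" using a by auto
    moreover assume "s \<in> {0..<t} \<longrightarrow> {s-r..<s} \<subseteq> {a..<t} \<longrightarrow> v s \<le> lam * ess_sup_on {a..<t} v + \<Gamma>"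
    ultimately show "v s \<le> lam * ess_sup_on {a..<t} v + \<Gamma>" by blast
  qed
qed

lemma ess_sup_on_geometric_decay:
  "ess_sup_on {real k * r - r..<t} v \<le> lam^k * S + \<Gamma> / (1 - lam)"
proof (induction k)
  case 0
  show ?case using ess_sup_on_initial_bound by simp
next
  case (Suc k)
  have "ess_sup_on {real (Suc k) * r - r..<t} v = ess_sup_on {(real k * r - r) + r..<t} v"
    by (simp add: algebra_simps)
  also have "\<dots> \<le> lam * ess_sup_on {real k * r - r..<t} v + \<Gamma>"
    using r by (intro ess_sup_on_delay_step) simp
  also have "\<dots> \<le> lam * (lam^k * S + \<Gamma> / (1 - lam)) + \<Gamma>"
    using Suc lam by (intro add_mono mult_left_mono) auto
  also have "\<dots> = lam^(Suc k) * S + \<Gamma> / (1 - lam)"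
    using lam by (simp add: field_simps)
  finally show ?case .
qed

end

section \<open>Proper Lyapunov functions\<close>

locale proper_lyapunov =
  fixes V :: "'a::euclidean_space \<Rightarrow> real"
  assumes V_cont: "continuous_on UNIV V"
    and V_zero: "V 0 = 0" and V_pos: "\<And>z. z \<noteq> 0 \<Longrightarrow> 0 < V z"
    and V_radially_unbounded: "filterlim V at_top at_infinity"
begin

lemma sublevel_bounded:
  obtains R where "\<And>z. V z \<le> L \<Longrightarrow> norm z \<le> R"
proof -
  have "eventually (\<lambda>z. L < V z) at_infinity"
    using V_radially_unbounded by (simp add: filterlim_at_top_dense)
  then obtain R where "\<And>z. R \<le> norm z \<Longrightarrow> L < V z" by (auto simp: eventually_at_infinity)
  then show thesis by (metis that linorder_not_le order_less_imp_le not_less)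
qed

lemma bounded_on_cball:
  obtains S where "0 \<le> S" "\<And>z. norm z \<le> B \<Longrightarrow> V z \<le> S"
proof -
  have "compact (V ` cball 0 B)"
    using V_cont by (intro compact_continuous_image) (auto intro: continuous_on_subset)
  then obtain S where S: "\<And>w. w \<in> V ` cball 0 B \<Longrightarrow> norm w \<le> S"
    using compact_imp_bounded bounded_iff by metis
  have "V z \<le> max S 0" if "norm z \<le> B" for z
  proof -
    have "V z \<in> V ` cball 0 B" using that by simp
    then have "norm (V z) \<le> S" by (rule S)
    then show ?thesis by simp
  qed
  then show thesis by (intro that[of "max S 0"]) auto
qed

lemma ess_bdd_above_on_V:
  assumes "Linf S X x"
  shows "ess_bdd_above_on S (\<lambda>s. V (x s))"
proof -
  obtain B where "AE s in lebesgue. s \<in> S \<longrightarrow> x s \<in> X \<and> norm (x s) \<le> B"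
    using LinfE[OF assms] by blast
  moreover obtain SB where "\<And>z. norm z \<le> B \<Longrightarrow> V z \<le> SB" by (rule bounded_on_cball) blast
  ultimately have "AE s in lebesgue. s \<in> S \<longrightarrow> V (x s) \<le> SB"
    by (auto elim: eventually_mono)
  then show ?thesis unfolding ess_bdd_above_on_def by blast
qed

lemma small_near_zero:
  assumes "0 < \<eta>"
  obtains \<delta> where "0 < \<delta>" "\<And>z. norm z \<le> \<delta> \<Longrightarrow> V z \<le> \<eta>"
proof -
  have "isCont V 0" using V_cont by (simp add: continuous_on_eq_continuous_at)
  then obtain \<delta> where \<delta>: "0 < \<delta>" "\<And>z. dist z 0 < \<delta> \<Longrightarrow> dist (V z) (V 0) < \<eta>"
    unfolding continuous_at_eps_delta using assms by blast
  have "V z \<le> \<eta>" if "norm z \<le> \<delta>/2" for z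
  proof -
    have "dist z 0 < \<delta>" using that \<open>0 < \<delta>\<close> by simp
    then have "dist (V z) (V 0) < \<eta>" by (rule \<delta>(2))
    then show ?thesis using V_zero by (simp add: dist_real_def)
  qed
  then show thesis using \<delta>(1) by (intro that[of "\<delta>/2"]) auto
qed

lemma small_only_near_zero:
  assumes "0 < e"
  obtains \<eta> where "0 < \<eta>" "\<And>z. V z \<le> \<eta> \<Longrightarrow> norm z < e"
proof -
  obtain R where R: "\<And>z. V z \<le> 1 \<Longrightarrow> norm z \<le> R" using sublevel_bounded by blast
  define K where "K = {z::'a. e \<le> norm z} \<inter> cball 0 R"
  have "compact K"
    unfolding K_def by (rule closed_Int_compact) (auto intro!: closed_Collect_le continuous_intros)
  show thesis
  proof (cases "K = {}")
    case True
    have "norm z < e" if "V z \<le> 1" for z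
    proof -
      have "z \<notin> K" using True by simp
      with R[OF that] show ?thesis by (auto simp: K_def)
    qed
    then show thesis by (intro that[of 1]) auto
  next
    case False
    \<comment> \<open>V attains a positive minimum on the compact annulus between e and R\<close>
    obtain z0 where z0: "z0 \<in> K" "\<And>z. z \<in> K \<Longrightarrow> V z0 \<le> V z"
      using continuous_attains_inf[OF \<open>compact K\<close> False continuous_on_subset[OF V_cont]] by auto
    have "0 < V z0" using z0(1) assms by (intro V_pos) (auto simp: K_def)
    moreover have "norm z < e" if "V z \<le> min 1 (V z0 / 2)" for z
    proof (rule ccontr)
      assume "\<not> norm z < e"
      moreover have "norm z \<le> R" using R that by simp
      ultimately have "z \<in> K" by (auto simp: K_def)
      then have "V z0 \<le> V z" by (rule z0(2))
      with that \<open>0 < V z0\<close> show False by simp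
    qed
    ultimately show thesis by (intro that[of "min 1 (V z0 / 2)"]) auto
  qed
qed

definition sublevel_radius :: "real \<Rightarrow> real" where
  "sublevel_radius c = Sup {norm z | z. V z \<le> c}"

lemma bdd_above_sublevel_norms: "bdd_above {norm z | z. V z \<le> c}"
  by (rule sublevel_bounded[of c]) (auto intro!: bdd_aboveI)

lemma sublevel_norms_nonempty: "0 \<le> c \<Longrightarrow> {norm z | z. V z \<le> c} \<noteq> {}"
  using V_zero by (auto intro!: exI[of _ 0])

lemma norm_le_sublevel_radius: "V z \<le> c \<Longrightarrow> norm z \<le> sublevel_radius c"
  unfolding sublevel_radius_def by (rule cSup_upper[OF _ bdd_above_sublevel_norms]) auto

lemma sublevel_radius_nonneg: "0 \<le> c \<Longrightarrow> 0 \<le> sublevel_radius c"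
  using norm_le_sublevel_radius[of 0 c] V_zero by simp

lemma sublevel_radius_mono: "0 \<le> c \<Longrightarrow> c \<le> c' \<Longrightarrow> sublevel_radius c \<le> sublevel_radius c'"
  unfolding sublevel_radius_def
  by (rule cSup_subset_mono[OF sublevel_norms_nonempty bdd_above_sublevel_norms]) auto

lemma sublevel_radius_small:
  assumes "0 < e"
  obtains \<eta> where "0 < \<eta>" "sublevel_radius \<eta> < e"
proof -
  obtain \<eta> where \<eta>: "0 < \<eta>" "\<And>z. V z \<le> \<eta> \<Longrightarrow> norm z < e/2"
    using small_only_near_zero[of "e/2"] assms by auto
  have "sublevel_radius \<eta> \<le> e/2"
    unfolding sublevel_radius_def using \<eta>
    by (intro cSup_least sublevel_norms_nonempty) (auto intro: less_imp_le)
  then show thesis using \<eta> assms by (intro that[of \<eta>]) auto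
qed

end

section \<open>Existence and uniqueness of solutions\<close>

locale delay_system =
  fixes r :: real and D :: "'d::euclidean_space set" and U :: "'u::euclidean_space set"
    and f :: "(real \<Rightarrow> 'a::euclidean_space) \<Rightarrow> (real \<Rightarrow> 'd) \<Rightarrow> (real \<Rightarrow> 'u) \<Rightarrow> 'a"
    and M N :: "real \<Rightarrow> real"
  assumes r_pos: "0 < r"
    and f_welldef: "\<And>x x' d d' u u'. Linf {-r..<0} UNIV x \<Longrightarrow> Linf {-r..<0} UNIV x' \<Longrightarrow>
        Linf {-r..0} D d \<Longrightarrow> Linf {-r..0} D d' \<Longrightarrow> Linf {-r..0} U u \<Longrightarrow> Linf {-r..0} U u' \<Longrightarrow>
        (AE s in lebesgue. s \<in> {-r..<0} \<longrightarrow> x s = x' s) \<Longrightarrow>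
        (AE s in lebesgue. s \<in> {-r..0} \<longrightarrow> d s = d' s) \<Longrightarrow>
        (AE s in lebesgue. s \<in> {-r..0} \<longrightarrow> u s = u' s) \<Longrightarrow> f x d u = f x' d' u'"
    and M_nonneg: "\<And>R. 0 < R \<Longrightarrow> 0 \<le> M R" and N_nonneg: "\<And>R. 0 < R \<Longrightarrow> 0 \<le> N R"
    and f_lipschitz: "\<And>R x y d u h. 0 < R \<Longrightarrow> Linf {-r..<0} UNIV x \<Longrightarrow> Linf {-r..<0} UNIV y \<Longrightarrow>
        Linf {-r..0} D d \<Longrightarrow> Linf {-r..0} U u \<Longrightarrow>
        Lnorm {-r..<0} x \<le> R \<Longrightarrow> Lnorm {-r..<0} y \<le> R \<Longrightarrow> Lnorm {-r..0} (\<lambda>s. (d s, u s)) \<le> R \<Longrightarrow>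
        h \<in> {0<..<r} \<Longrightarrow> norm (f x d u - f y d u) \<le>
          N R * h * Lnorm {-h..<0} (\<lambda>s. x s - y s) + M R * Lnorm {-r..<-h} (\<lambda>s. x s - y s)"
    and f_history_Linf: "\<And>\<delta> x d u. 0 < \<delta> \<Longrightarrow> Linf {-r..<\<delta>} UNIV x \<Longrightarrow> Linf {-r..\<delta>} D d \<Longrightarrow>
        Linf {-r..\<delta>} U u \<Longrightarrow>
        Linf {-r..<\<delta>} UNIV (\<lambda>t. if t < 0 then x t else f (shift x t) (shift d t) (shift u t))"
begin

definition picard :: "(real \<Rightarrow> 'a) \<Rightarrow> (real \<Rightarrow> 'd) \<Rightarrow> (real \<Rightarrow> 'u) \<Rightarrow> (real \<Rightarrow> 'a) \<Rightarrow> real \<Rightarrow> 'a" where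
  "picard x0 d u y t = (if t < 0 then x0 t else f (shift y t) (shift d t) (shift u t))"

lemma contraction_parameters:
  assumes "0 < R"
  obtains h \<beta> where "0 < h" "h < r" "0 \<le> \<beta>" "N R * h \<le> 1/4" "M R * exp (-\<beta> * h) \<le> 1/4"
proof -
  have NM: "0 \<le> N R" "0 \<le> M R" using assms N_nonneg M_nonneg by auto
  define h where "h = min (r/2) (1 / (4 * N R + 4))"
  have h: "0 < h" "h < r" using r_pos NM by (auto simp: h_def)
  have "N R * h \<le> N R * (1 / (4 * N R + 4))" using NM by (intro mult_left_mono) (auto simp: h_def)
  also have "\<dots> \<le> 1/4" using NM by (simp add: field_simps)
  finally have "N R * h \<le> 1/4" .
  \<comment> \<open>the exponential weight makes the far part of the history, older than h, count less than 1/4\<close>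
  moreover define \<beta> where "\<beta> = ln (4 * M R + 1) / h"
  moreover have "M R * exp (-\<beta> * h) = M R / (4 * M R + 1)"
    using h NM by (simp add: \<beta>_def exp_minus exp_ln inverse_eq_divide)
  moreover have "M R / (4 * M R + 1) \<le> 1/4" using NM by (simp add: field_simps)
  ultimately show thesis using h NM by (intro that[of h \<beta>]) (auto simp: \<beta>_def)
qed


lemma picard_difference_halves:
  fixes y z :: "real \<Rightarrow> 'a"
  assumes y: "Linf {-r..<T} UNIV y" and z: "Linf {-r..<T} UNIV z"
    and d: "Linf {-r..T} D d" and u: "Linf {-r..T} U u" and R: "0 < R"
    and yz_R: "AE s in lebesgue. s \<in> {-r..<T} \<longrightarrow> norm (y s) \<le> R \<and> norm (z s) \<le> R"
    and du_R: "AE s in lebesgue. s \<in> {-r..T} \<longrightarrow> norm (d s, u s) \<le> R"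
    and eq: "AE s in lebesgue. s \<in> {-r..<0} \<longrightarrow> y s = z s"
    and diff: "AE s in lebesgue. s \<in> {0..<T} \<longrightarrow> norm (y s - z s) \<le> c * exp (\<beta> * s)"
    and c: "0 \<le> c" and \<beta>: "0 \<le> \<beta>"
    and h: "0 < h" "h < r" "N R * h \<le> 1/4" "M R * exp (-\<beta> * h) \<le> 1/4"
    and t: "t \<in> {0..<T}"
  shows "norm (picard x0 d u y t - picard x0 d u z t) \<le> c / 2 * exp (\<beta> * t)"
proof -
  let ?x = "shift y t" and ?y = "shift z t" and ?e = "shift (\<lambda>s. y s - z s) t"
  have "AE s in lebesgue. s \<in> {-r..<T} \<longrightarrow> norm (y s) \<le> R"
    "AE s in lebesgue. s \<in> {-r..<T} \<longrightarrow> norm (z s) \<le> R"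
    using yz_R by (rule eventually_mono, blast)+
  then have "Lnorm {-r..<0} ?x \<le> R" "Lnorm {-r..<0} ?y \<le> R"
    using R t by (auto intro!: Lnorm_shift_le[where S="{-r..<T}"])
  moreover have "Lnorm {-r..0} (\<lambda>s. (shift d t s, shift u t s)) \<le> R"
    using Lnorm_shift_le[where g="\<lambda>s. (d s, u s)" and S'="{-r..0}", OF du_R] R t
    by (simp add: shift_def)
  moreover have "Linf {-r..<0} UNIV ?x" "Linf {-r..<0} UNIV ?y"
    "Linf {-r..0} D (shift d t)" "Linf {-r..0} U (shift u t)"
    using t by (auto intro!: Linf_shift[OF y] Linf_shift[OF z] Linf_shift[OF d] Linf_shift[OF u])
  ultimately have lip: "norm (f ?x (shift d t) (shift u t) - f ?y (shift d t) (shift u t))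
      \<le> N R * h * Lnorm {-h..<0} ?e + M R * Lnorm {-r..<-h} ?e"
    using f_lipschitz[OF R] h by (simp add: shift_def)
  have near: "Lnorm {-h..<0} ?e \<le> c * exp (\<beta> * t)"
    using AE_diff_le_exp_before[OF eq diff c \<beta>, of t] c t h
    by (intro Lnorm_shift_le[where S="{s \<in> {-r..<T}. s \<le> t}"]) (auto elim!: eventually_mono)
  have far: "Lnorm {-r..<-h} ?e \<le> c * exp (\<beta> * (t - h))"
    using AE_diff_le_exp_before[OF eq diff c \<beta>, of "t - h"] c t h
    by (intro Lnorm_shift_le[where S="{s \<in> {-r..<T}. s \<le> t - h}"]) (auto elim!: eventually_mono)
  have NM: "0 \<le> N R" "0 \<le> M R" using R N_nonneg M_nonneg by auto
  have "N R * h * Lnorm {-h..<0} ?e + M R * Lnorm {-r..<-h} ?e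
      \<le> N R * h * (c * exp (\<beta> * t)) + M R * (c * exp (\<beta> * (t - h)))"
    using near far NM h by (intro add_mono mult_left_mono) auto
  also have "\<dots> = c * exp (\<beta> * t) * (N R * h + M R * exp (-\<beta> * h))"
    by (simp add: algebra_simps flip: exp_add)
  also have "\<dots> \<le> c * exp (\<beta> * t) * (1/2)"
    using h c by (intro mult_left_mono) auto
  finally show ?thesis using lip t by (simp add: picard_def)
qed


lemma AE_diff_le_twice_bound:
  assumes "AE s in lebesgue. s \<in> {-r..<T} \<longrightarrow> norm (y s) \<le> R \<and> norm (z s) \<le> R" "0 \<le> \<beta>"
  shows "AE s in lebesgue. s \<in> {0..<T} \<longrightarrow> norm (y s - z s) \<le> 2 * R * exp (\<beta> * s)"
  using assms(1)
proof (rule eventually_mono, intro impI)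
  fix s assume "s \<in> {-r..<T} \<longrightarrow> norm (y s) \<le> R \<and> norm (z s) \<le> R" and s: "s \<in> {0..<T}"
  then have "norm (y s - z s) \<le> 2 * R" using r_pos norm_triangle_ineq4[of "y s" "z s"] by auto
  moreover have "1 \<le> exp (\<beta> * s)" using s assms(2) by simp
  moreover have "0 \<le> 2 * R" using \<open>norm (y s - z s) \<le> 2 * R\<close> norm_ge_zero[of "y s - z s"] by linarith
  ultimately show "norm (y s - z s) \<le> 2 * R * exp (\<beta> * s)"
    using mult_left_mono[of 1 "exp (\<beta> * s)" "2 * R"] by linarith
qed

lemma bounds_of_Linf:
  assumes "Linf {-r..<T} UNIV y" "Linf {-r..<T} UNIV z" "Linf {-r..T} D d" "Linf {-r..T} U u"
  obtains R where "0 < R"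
    "AE s in lebesgue. s \<in> {-r..<T} \<longrightarrow> norm (y s) \<le> R \<and> norm (z s) \<le> R"
    "AE s in lebesgue. s \<in> {-r..T} \<longrightarrow> norm (d s, u s) \<le> R"
proof -
  obtain B1 where "0 \<le> B1" "AE s in lebesgue. s \<in> {-r..<T} \<longrightarrow> y s \<in> UNIV \<and> norm (y s) \<le> B1"
    using LinfE[OF assms(1)] .
  moreover obtain B2 where "0 \<le> B2" "AE s in lebesgue. s \<in> {-r..<T} \<longrightarrow> z s \<in> UNIV \<and> norm (z s) \<le> B2"
    using LinfE[OF assms(2)] .
  moreover obtain Bd where "0 \<le> Bd" "AE s in lebesgue. s \<in> {-r..T} \<longrightarrow> d s \<in> D \<and> norm (d s) \<le> Bd"
    using LinfE[OF assms(3)] .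
  moreover obtain Bu where "0 \<le> Bu" "AE s in lebesgue. s \<in> {-r..T} \<longrightarrow> u s \<in> U \<and> norm (u s) \<le> Bu"
    using LinfE[OF assms(4)] .
  ultimately have B: "0 \<le> B1" "0 \<le> B2" "0 \<le> Bd" "0 \<le> Bu"
    and yz: "AE s in lebesgue. s \<in> {-r..<T} \<longrightarrow> norm (y s) \<le> B1 \<and> norm (z s) \<le> B2"
    and du: "AE s in lebesgue. s \<in> {-r..T} \<longrightarrow> norm (d s) \<le> Bd \<and> norm (u s) \<le> Bu"
    by (auto elim: eventually_elim2)
  define R where "R = B1 + B2 + Bd + Bu + 1"
  have "AE s in lebesgue. s \<in> {-r..<T} \<longrightarrow> norm (y s) \<le> R \<and> norm (z s) \<le> R"
    using yz by (rule eventually_mono) (use B in \<open>auto simp: R_def\<close>)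
  moreover have "AE s in lebesgue. s \<in> {-r..T} \<longrightarrow> norm (d s, u s) \<le> R"
    using du
  proof (rule eventually_mono, intro impI)
    fix s assume "s \<in> {-r..T} \<longrightarrow> norm (d s) \<le> Bd \<and> norm (u s) \<le> Bu" "s \<in> {-r..T}"
    then show "norm (d s, u s) \<le> R"
      using B norm_Pair_le[of "d s" "u s"] by (auto simp: R_def)
  qed
  ultimately show thesis using B by (intro that[of R]) (auto simp: R_def)
qed

lemma solutions_unique:
  assumes z1: "Linf {-r..<T} UNIV z1" and z2: "Linf {-r..<T} UNIV z2"
    and d: "Linf {-r..T} D d" and u: "Linf {-r..T} U u"
    and eq: "AE s in lebesgue. s \<in> {-r..<0} \<longrightarrow> z1 s = z2 s"
    and sol1: "AE t in lebesgue. t \<in> {0..<T} \<longrightarrow> z1 t = f (shift z1 t) (shift d t) (shift u t)"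
    and sol2: "AE t in lebesgue. t \<in> {0..<T} \<longrightarrow> z2 t = f (shift z2 t) (shift d t) (shift u t)"
  shows "AE s in lebesgue. s \<in> {-r..<T} \<longrightarrow> z1 s = z2 s"
proof -
  obtain R where R: "0 < R"
    and zR: "AE s in lebesgue. s \<in> {-r..<T} \<longrightarrow> norm (z1 s) \<le> R \<and> norm (z2 s) \<le> R"
    and duR: "AE s in lebesgue. s \<in> {-r..T} \<longrightarrow> norm (d s, u s) \<le> R"
    using bounds_of_Linf[OF z1 z2 d u] by blast
  obtain h \<beta> where h: "0 < h" "h < r" "N R * h \<le> 1/4" "M R * exp (-\<beta> * h) \<le> 1/4" and \<beta>: "0 \<le> \<beta>"
    using contraction_parameters[OF R] by blast
  have halving: "AE s in lebesgue. s \<in> {0..<T} \<longrightarrow> norm (z1 s - z2 s) \<le> 2 * R * (1/2)^k * exp (\<beta> * s)" for k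
  proof (induction k)
    case 0
    show ?case using AE_diff_le_twice_bound[OF zR \<beta>] by simp
  next
    case (Suc k)
    have pw: "norm (picard z1 d u z1 t - picard z1 d u z2 t) \<le> 2 * R * (1/2)^k / 2 * exp (\<beta> * t)"
      if "t \<in> {0..<T}" for t
      using R by (intro picard_difference_halves[OF z1 z2 d u R zR duR eq Suc _ \<beta> h that]) simp
    from sol1 sol2 show ?case
      by eventually_elim (use pw in \<open>auto simp: picard_def\<close>)
  qed
  have "AE s in lebesgue. \<forall>k. s \<in> {0..<T} \<longrightarrow> norm (z1 s - z2 s) \<le> 2 * R * exp (\<beta> * s) * (1/2)^k"
    using halving by (subst AE_all_countable) (simp add: mult_ac)
  with eq show ?thesis
  proof eventually_elim
    case (elim s)
    show ?case
    proof (intro impI)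
      assume s: "s \<in> {-r..<T}"
      show "z1 s = z2 s"
      proof (cases "s < 0")
        case False
        with s elim have "norm (z1 s - z2 s) \<le> 2 * R * exp (\<beta> * s) * (1/2)^k" for k by auto
        then have "norm (z1 s - z2 s) \<le> 0" by (rule nonpos_if_le_geometric)
        then show ?thesis by simp
      qed (use s elim in auto)
    qed
  qed
qed

lemma f_shift_cong:
  assumes y: "Linf {-r..<T} UNIV y" and z: "Linf {-r..<T} UNIV z"
    and d: "Linf {-r..T} D d" and u: "Linf {-r..T} U u"
    and eq: "AE s in lebesgue. s \<in> {-r..<T} \<longrightarrow> y s = z s" and t: "t \<in> {0..<T}"
  shows "f (shift y t) (shift d t) (shift u t) = f (shift z t) (shift d t) (shift u t)"
proof (rule f_welldef)
  show "Linf {-r..<0} UNIV (shift y t)" "Linf {-r..<0} UNIV (shift z t)"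
    "Linf {-r..0} D (shift d t)" "Linf {-r..0} U (shift u t)"
    using t by (auto intro!: Linf_shift[OF y] Linf_shift[OF z] Linf_shift[OF d] Linf_shift[OF u])
  show "AE s in lebesgue. s \<in> {-r..<0} \<longrightarrow> shift y t s = shift z t s"
    using AE_lebesgue_translate[OF eq, of t] by (rule eventually_mono) (use t in \<open>auto simp: shift_def\<close>)
qed (use t in \<open>auto intro!: Linf_shift[OF d] Linf_shift[OF u]\<close>)

end

locale dissipative_delay_system = delay_system r D U f M N + proper_lyapunov V
  for r :: real and D :: "'d::euclidean_space set" and U :: "'u::euclidean_space set"
    and f :: "(real \<Rightarrow> 'a::euclidean_space) \<Rightarrow> (real \<Rightarrow> 'd) \<Rightarrow> (real \<Rightarrow> 'u) \<Rightarrow> 'a"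
    and M N :: "real \<Rightarrow> real" and V :: "'a \<Rightarrow> real" +
  fixes \<gamma> :: "real \<Rightarrow> real" and lam :: real
  assumes \<gamma>_mono: "nondecr_nonneg \<gamma>" and lam: "0 < lam" "lam < 1"
    and dissipation: "\<And>x d u. Linf {-r..<0} UNIV x \<Longrightarrow> Linf {-r..0} D d \<Longrightarrow> Linf {-r..0} U u \<Longrightarrow>
        V (f x d u) \<le> lam * ess_sup_on {-r..<0} (\<lambda>s. V (x s)) + \<gamma> (Lnorm {-r..0} u)"
begin

lemma \<gamma>_le: "0 \<le> c \<Longrightarrow> c \<le> c' \<Longrightarrow> \<gamma> c \<le> \<gamma> c'" and \<gamma>_nonneg: "0 \<le> c \<Longrightarrow> 0 \<le> \<gamma> c"
  using \<gamma>_mono unfolding nondecr_nonneg_def mono_on_def by auto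

definition sublevel_history :: "real \<Rightarrow> real \<Rightarrow> (real \<Rightarrow> 'a) \<Rightarrow> (real \<Rightarrow> 'a) \<Rightarrow> bool" where
  "sublevel_history T L x0 y \<longleftrightarrow> Linf {-r..<T} UNIV y \<and> (\<forall>s<0. y s = x0 s) \<and>
     (AE s in lebesgue. s \<in> {-r..<T} \<longrightarrow> V (y s) \<le> L)"

lemma V_f_shift_le:
  assumes y: "Linf {-r..<T} UNIV y" and d: "Linf {-r..T} D d" and u: "Linf {-r..T} U u"
    and yL: "AE s in lebesgue. s \<in> {-r..<T} \<longrightarrow> V (y s) \<le> L" and "0 \<le> L"
    and uB: "AE s in lebesgue. s \<in> {-r..T} \<longrightarrow> norm (u s) \<le> B" and "0 \<le> B"
    and t: "t \<in> {0..<T}"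
  shows "V (f (shift y t) (shift d t) (shift u t)) \<le> lam * L + \<gamma> B"
proof -
  have "AE s in lebesgue. s \<in> {-r..<0} \<longrightarrow> V (shift y t s) \<le> L"
    using AE_shift[where P="\<lambda>z. V z \<le> L", OF yL, of "{-r..<0}" t] t by auto
  then have "ess_sup_on {-r..<0} (\<lambda>s. V (shift y t s)) \<le> L"
    using \<open>0 \<le> L\<close> by (intro ess_sup_on_le)
  moreover have "Linf {-r..0} U (shift u t)" using t by (intro Linf_shift[OF u]) auto
  then have "\<gamma> (Lnorm {-r..0} (shift u t)) \<le> \<gamma> B"
    using t Lnorm_shift_le[OF uB \<open>0 \<le> B\<close>, of "{-r..0}" t] by (intro \<gamma>_le Lnorm_nonneg) auto
  moreover have "V (f (shift y t) (shift d t) (shift u t))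
      \<le> lam * ess_sup_on {-r..<0} (\<lambda>s. V (shift y t s)) + \<gamma> (Lnorm {-r..0} (shift u t))"
    using t by (intro dissipation Linf_shift[OF y] Linf_shift[OF d] Linf_shift[OF u]) auto
  ultimately show ?thesis using lam by (smt (verit) mult_left_mono)
qed

lemma picard_sublevel_history:
  assumes T: "0 < T" and y: "sublevel_history T L x0 y"
    and x0L: "AE s in lebesgue. s \<in> {-r..<0} \<longrightarrow> V (x0 s) \<le> L"
    and d: "Linf {-r..T} D d" and u: "Linf {-r..T} U u"
    and uB: "AE s in lebesgue. s \<in> {-r..T} \<longrightarrow> norm (u s) \<le> B" and "0 \<le> B"
    and L: "0 \<le> L" "lam * L + \<gamma> B \<le> L"
  shows "sublevel_history T L x0 (picard x0 d u y)"
proof -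
  have yL: "Linf {-r..<T} UNIV y" and y_x0: "\<forall>s<0. y s = x0 s"
    and V_y: "AE s in lebesgue. s \<in> {-r..<T} \<longrightarrow> V (y s) \<le> L"
    using y by (auto simp: sublevel_history_def)
  have "picard x0 d u y = (\<lambda>t. if t < 0 then y t else f (shift y t) (shift d t) (shift u t))"
    using y_x0 by (auto simp: picard_def fun_eq_iff)
  then have "Linf {-r..<T} UNIV (picard x0 d u y)"
    using f_history_Linf[OF T yL d u] by simp
  moreover have "V (picard x0 d u y t) \<le> L" if "t \<in> {0..<T}" for t
    using V_f_shift_le[OF yL d u V_y L(1) uB \<open>0 \<le> B\<close> that] L(2) that by (simp add: picard_def)
  then have "AE s in lebesgue. s \<in> {-r..<T} \<longrightarrow> V (picard x0 d u y s) \<le> L"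
    using x0L by (auto simp: picard_def not_less elim!: eventually_mono)
  ultimately show ?thesis by (simp add: sublevel_history_def picard_def)
qed

lemma zero_extension_sublevel_history:
  assumes x0: "Linf {-r..<0} UNIV x0" and x0_L: "AE s in lebesgue. s \<in> {-r..<0} \<longrightarrow> V (x0 s) \<le> L"
    and "0 \<le> L" "0 < T"
  shows "sublevel_history T L x0 (\<lambda>s. if s < 0 then x0 s else 0)"
proof -
  have "(\<lambda>s. indicator {-r..<T} s *\<^sub>R (if s < 0 then x0 s else 0)) = (\<lambda>s. indicator {-r..<0} s *\<^sub>R x0 s)"
    using \<open>0 < T\<close> by (auto simp: indicator_def fun_eq_iff)
  moreover obtain B where "0 \<le> B" "AE s in lebesgue. s \<in> {-r..<0} \<longrightarrow> x0 s \<in> UNIV \<and> norm (x0 s) \<le> B"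
    by (rule LinfE[OF x0])
  ultimately have "Linf {-r..<T} UNIV (\<lambda>s. if s < 0 then x0 s else 0)"
    using x0 \<open>0 < T\<close> unfolding Linf_def set_borel_measurable_def
    by (auto elim!: eventually_mono intro!: exI[of _ B])
  moreover have "AE s in lebesgue. s \<in> {-r..<T} \<longrightarrow> V (if s < 0 then x0 s else 0) \<le> L"
    using x0_L by (rule eventually_mono) (auto simp: V_zero \<open>0 \<le> L\<close>)
  ultimately show ?thesis by (auto simp: sublevel_history_def)
qed

lemma sublevel_history_lim:
  fixes ys :: "nat \<Rightarrow> real \<Rightarrow> 'a"
  assumes ys: "\<And>j. sublevel_history T L x0 (ys j)"
    and conv: "AE s in lebesgue. s \<in> {0..<T} \<longrightarrow> (\<lambda>j. ys j s) \<longlonglongrightarrow> lim (\<lambda>j. ys j s)"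
  shows "sublevel_history T L x0 (\<lambda>s. lim (\<lambda>j. ys j s))"
proof -
  let ?y = "\<lambda>s. lim (\<lambda>j. ys j s)"
  have neg: "?y s = x0 s" if "s < 0" for s
    using ys that by (intro lim_eventually_eq) (simp add: sublevel_history_def)
  have "AE s in lebesgue. \<forall>j. s \<in> {-r..<T} \<longrightarrow> V (ys j s) \<le> L"
    using ys by (subst AE_all_countable) (simp add: sublevel_history_def)
  then have V_y: "AE s in lebesgue. s \<in> {-r..<T} \<longrightarrow> V (?y s) \<le> L"
    using conv
  proof eventually_elim
    case (elim s)
    show ?case
    proof (intro impI)
      assume s: "s \<in> {-r..<T}"
      show "V (?y s) \<le> L"
      proof (cases "s < 0")
        case True
        then show ?thesis using elim s neg[OF True] ys by (simp add: sublevel_history_def)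
      next
        case False
        then have "(\<lambda>j. V (ys j s)) \<longlonglongrightarrow> V (?y s)"
          using elim s V_cont by (intro isCont_tendsto_compose[where g=V]) (auto simp: continuous_on_eq_continuous_at)
        then show ?thesis using elim s by (intro LIMSEQ_le_const2) auto
      qed
    qed
  qed
  obtain R where "\<And>z. V z \<le> L \<Longrightarrow> norm z \<le> R" using sublevel_bounded by blast
  then have "AE s in lebesgue. s \<in> {-r..<T} \<longrightarrow> ?y s \<in> UNIV \<and> norm (?y s) \<le> R"
    using V_y by (auto elim!: eventually_mono)
  moreover have "set_borel_measurable lebesgue {-r..<T} ?y"
    using ys by (intro set_borel_measurable_lim) (simp add: sublevel_history_def Linf_def)
  ultimately show ?thesis using neg V_y by (auto simp: sublevel_history_def Linf_def)
qed


end

locale picard_setting = dissipative_delay_system r D U f M N V \<gamma> lam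
  for r :: real and D :: "'d::euclidean_space set" and U :: "'u::euclidean_space set"
    and f :: "(real \<Rightarrow> 'a::euclidean_space) \<Rightarrow> (real \<Rightarrow> 'd) \<Rightarrow> (real \<Rightarrow> 'u) \<Rightarrow> 'a"
    and M N :: "real \<Rightarrow> real" and V :: "'a \<Rightarrow> real" and \<gamma> :: "real \<Rightarrow> real" and lam :: real +
  fixes T L Bu R h \<beta> :: real and x0 :: "real \<Rightarrow> 'a" and d :: "real \<Rightarrow> 'd" and u :: "real \<Rightarrow> 'u"
  assumes T: "0 < T" and d: "Linf {-r..T} D d" and u: "Linf {-r..T} U u"
    and x0_L: "AE s in lebesgue. s \<in> {-r..<0} \<longrightarrow> V (x0 s) \<le> L"
    and u_B: "AE s in lebesgue. s \<in> {-r..T} \<longrightarrow> norm (u s) \<le> Bu" and Bu: "0 \<le> Bu"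
    and L: "0 \<le> L" and L_invariant: "lam * L + \<gamma> Bu \<le> L"
    and R: "0 < R" and sublevel_R: "\<And>z. V z \<le> L \<Longrightarrow> norm z \<le> R"
    and du_R: "AE s in lebesgue. s \<in> {-r..T} \<longrightarrow> norm (d s, u s) \<le> R"
    and h: "0 < h" "h < r" "N R * h \<le> 1/4" "M R * exp (-\<beta> * h) \<le> 1/4" and \<beta>: "0 \<le> \<beta>"
begin

abbreviation "\<Psi> \<equiv> picard x0 d u"

lemma sublevel_history_bounded:
  assumes "sublevel_history T L x0 y" "sublevel_history T L x0 z"
  shows "AE s in lebesgue. s \<in> {-r..<T} \<longrightarrow> norm (y s) \<le> R \<and> norm (z s) \<le> R"
  using assms unfolding sublevel_history_def by (auto elim!: eventually_elim2 dest!: sublevel_R)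

lemma picard_halves_on_sublevel:
  assumes "sublevel_history T L x0 y" "sublevel_history T L x0 z" "0 \<le> c" "t \<in> {0..<T}"
    "AE s in lebesgue. s \<in> {0..<T} \<longrightarrow> norm (y s - z s) \<le> c * exp (\<beta> * s)"
  shows "norm (\<Psi> y t - \<Psi> z t) \<le> c / 2 * exp (\<beta> * t)"
  using assms sublevel_history_bounded[OF assms(1,2)]
  by (intro picard_difference_halves[OF _ _ d u R _ du_R _ _ _ \<beta> h]) (auto simp: sublevel_history_def)

lemma picard_iterates_sublevel: "sublevel_history T L x0 y0 \<Longrightarrow> sublevel_history T L x0 ((\<Psi> ^^ j) y0)"
  by (induction j) (auto intro: picard_sublevel_history[OF T _ x0_L d u u_B Bu L L_invariant])

lemma picard_iterates_steps:
  assumes y0: "sublevel_history T L x0 y0"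
  shows "AE s in lebesgue. s \<in> {0..<T} \<longrightarrow>
      norm ((\<Psi> ^^ Suc j) y0 s - (\<Psi> ^^ j) y0 s) \<le> 2 * R * exp (\<beta> * s) * (1/2)^j"
proof (induction j)
  case 0
  show ?case
    using AE_diff_le_twice_bound[OF sublevel_history_bounded[OF picard_iterates_sublevel[OF y0, of 1]
        picard_iterates_sublevel[OF y0, of 0]] \<beta>] by simp
next
  case (Suc j)
  have "norm ((\<Psi> ^^ Suc (Suc j)) y0 t - (\<Psi> ^^ Suc j) y0 t) \<le> 2 * R * exp (\<beta> * t) * (1/2)^Suc j"
    if "t \<in> {0..<T}" for t
    using picard_halves_on_sublevel[OF picard_iterates_sublevel[OF y0, of "Suc j"]
        picard_iterates_sublevel[OF y0, of j] _ that, where c="2 * R * (1/2)^j"] Suc R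
    by (simp add: mult_ac)
  then show ?case by (auto intro: AE_I2)
qed

lemma picard_fixed_point:
  assumes y0: "sublevel_history T L x0 y0"
  obtains y where "sublevel_history T L x0 y" "AE t in lebesgue. t \<in> {0..<T} \<longrightarrow> y t = \<Psi> y t"
proof -
  define ys where "ys j = (\<Psi> ^^ j) y0" for j
  define y where "y s = lim (\<lambda>j. ys j s)" for s
  have ys: "sublevel_history T L x0 (ys j)" for j
    unfolding ys_def by (rule picard_iterates_sublevel[OF y0])
  have conv: "AE s in lebesgue. s \<in> {0..<T} \<longrightarrow> (\<lambda>j. ys j s) \<longlonglongrightarrow> y s \<and>
      (\<forall>j. norm (y s - ys j s) \<le> 2 * (2 * R * exp (\<beta> * s)) * (1/2)^j)"
    unfolding y_def ys_def by (rule AE_geometric_steps_convergent[OF picard_iterates_steps[OF y0]])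
  have y: "sublevel_history T L x0 y"
    unfolding y_def using conv by (intro sublevel_history_lim[OF ys]) (auto simp: y_def elim!: eventually_mono)
  have close: "AE s in lebesgue. s \<in> {0..<T} \<longrightarrow> norm (y s - ys j s) \<le> 4 * R * (1/2)^j * exp (\<beta> * s)" for j
    using conv by (rule eventually_mono) (auto simp: mult_ac)
  have "AE t in lebesgue. t \<in> {0..<T} \<longrightarrow> y t = \<Psi> y t"
    using conv
  proof (rule eventually_mono, intro impI)
    fix t assume t: "t \<in> {0..<T}"
      and "t \<in> {0..<T} \<longrightarrow> (\<lambda>j. ys j t) \<longlonglongrightarrow> y t \<and>
        (\<forall>j. norm (y t - ys j t) \<le> 2 * (2 * R * exp (\<beta> * t)) * (1/2)^j)"
    then have near: "norm (y t - ys j t) \<le> 4 * R * (1/2)^j * exp (\<beta> * t)" for j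
      by (auto simp: mult_ac)
    \<comment> \<open>both \<open>y\<close> and \<open>\<Psi> y\<close> are within \<open>O(2\<^sup>-\<^sup>j)\<close> of the iterate \<open>ys (Suc j)\<close>\<close>
    have "norm (y t - \<Psi> y t) \<le> 4 * R * exp (\<beta> * t) * (1/2)^j" for j
    proof -
      have "norm (\<Psi> y t - ys (Suc j) t) \<le> 4 * R * (1/2)^j / 2 * exp (\<beta> * t)"
        using picard_halves_on_sublevel[OF y ys _ t close] R by (simp add: ys_def)
      moreover have "norm (y t - ys (Suc j) t) \<le> 4 * R * (1/2)^Suc j * exp (\<beta> * t)"
        by (rule near)
      moreover have "norm (y t - \<Psi> y t) \<le> norm (y t - ys (Suc j) t) + norm (\<Psi> y t - ys (Suc j) t)"
        using norm_triangle_ineq[of "y t - ys (Suc j) t" "ys (Suc j) t - \<Psi> y t"]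
        by (simp add: norm_minus_commute)
      ultimately show ?thesis by (simp add: algebra_simps)
    qed
    then have "norm (y t - \<Psi> y t) \<le> 0" by (rule nonpos_if_le_geometric)
    then show "y t = \<Psi> y t" by simp
  qed
  with y show thesis by (rule that)
qed

end

context dissipative_delay_system
begin

lemma local_existence:
  assumes x0: "Linf {-r..<0} UNIV x0" and d: "Linf {-r..T} D d" and u: "Linf {-r..T} U u"
    and T: "0 < T"
  obtains y where "Linf {-r..<T} UNIV y" "\<forall>s<0. y s = x0 s"
    "AE t in lebesgue. t \<in> {0..<T} \<longrightarrow> y t = f (shift y t) (shift d t) (shift u t)"
proof -
  obtain Bx where "0 \<le> Bx" and Bx: "AE s in lebesgue. s \<in> {-r..<0} \<longrightarrow> x0 s \<in> UNIV \<and> norm (x0 s) \<le> Bx"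
    using LinfE[OF x0] .
  obtain Bd where "0 \<le> Bd" and Bd: "AE s in lebesgue. s \<in> {-r..T} \<longrightarrow> d s \<in> D \<and> norm (d s) \<le> Bd"
    using LinfE[OF d] .
  obtain Bu where "0 \<le> Bu" and Bu: "AE s in lebesgue. s \<in> {-r..T} \<longrightarrow> u s \<in> U \<and> norm (u s) \<le> Bu"
    using LinfE[OF u] .
  obtain S0 where "0 \<le> S0" and S0: "\<And>z. norm z \<le> Bx \<Longrightarrow> V z \<le> S0"
    by (rule bounded_on_cball[of Bx]) blast
  define L where "L = max S0 (\<gamma> Bu / (1 - lam))"
  have "\<gamma> Bu = (1 - lam) * (\<gamma> Bu / (1 - lam))" using lam by simp
  also have "\<dots> \<le> (1 - lam) * L" using lam by (intro mult_left_mono) (auto simp: L_def)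
  finally have L_invariant: "lam * L + \<gamma> Bu \<le> L" by (simp add: algebra_simps)
  have x0_L: "AE s in lebesgue. s \<in> {-r..<0} \<longrightarrow> V (x0 s) \<le> L"
    using Bx by (rule eventually_mono) (auto simp: L_def intro: S0 le_max_iff_disj[THEN iffD2])
  obtain RL where RL: "\<And>z. V z \<le> L \<Longrightarrow> norm z \<le> RL" using sublevel_bounded by blast
  define R where "R = max RL (Bd + Bu) + 1"
  have "0 < R" using \<open>0 \<le> Bd\<close> \<open>0 \<le> Bu\<close> by (simp add: R_def)
  have L_R: "norm z \<le> R" if "V z \<le> L" for z
    using RL[OF that] by (simp add: R_def)
  obtain h \<beta> where h: "0 < h" "h < r" "N R * h \<le> 1/4" "M R * exp (-\<beta> * h) \<le> 1/4" and \<beta>: "0 \<le> \<beta>"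
    using contraction_parameters[OF \<open>0 < R\<close>] by blast
  have du_R: "AE s in lebesgue. s \<in> {-r..T} \<longrightarrow> norm (d s, u s) \<le> R"
    using Bd Bu
  proof eventually_elim
    case (elim s)
    then show ?case using norm_Pair_le[of "d s" "u s"] by (auto simp: R_def)
  qed
  have u_B: "AE s in lebesgue. s \<in> {-r..T} \<longrightarrow> norm (u s) \<le> Bu"
    using Bu by (rule eventually_mono) auto
  interpret picard_setting r D U f M N V \<gamma> lam T L Bu R h \<beta> x0 d u
    using T d u x0_L u_B \<open>0 \<le> Bu\<close> \<open>0 \<le> S0\<close> L_invariant \<open>0 < R\<close> L_R du_R h \<beta>
    by unfold_locales (auto simp: L_def)
  from zero_extension_sublevel_history[OF x0 x0_L L T]
  obtain y where "sublevel_history T L x0 y" "AE t in lebesgue. t \<in> {0..<T} \<longrightarrow> y t = \<Psi> y t"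
    by (rule picard_fixed_point)
  then show thesis
    by (intro that[of y]) (auto simp: sublevel_history_def picard_def elim!: eventually_mono)
qed

lemma local_solutions:
  assumes x0: "Linf {-r..<0} UNIV x0" and d: "Linf {-r..} D d" and u: "Linf_loc (-r) U u"
  obtains ys where "\<And>n. Linf {-r..<real (Suc n)} UNIV (ys n)" "\<And>n s. s < 0 \<Longrightarrow> ys n s = x0 s"
    "\<And>n. AE t in lebesgue. t \<in> {0..<real (Suc n)} \<longrightarrow> ys n t = f (shift (ys n) t) (shift d t) (shift u t)"
    "\<And>n m. n \<le> m \<Longrightarrow> AE s in lebesgue. s \<in> {-r..<real (Suc n)} \<longrightarrow> ys m s = ys n s"
proof -
  have dT: "Linf {-r..T} D d" for T by (rule Linf_subset[OF d]) auto
  have uT: "Linf {-r..T} U u" if "0 \<le> T" for T using u r_pos that by (simp add: Linf_loc_def)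
  have "\<forall>n. \<exists>y. Linf {-r..<real (Suc n)} UNIV y \<and> (\<forall>s<0. y s = x0 s) \<and>
      (AE t in lebesgue. t \<in> {0..<real (Suc n)} \<longrightarrow> y t = f (shift y t) (shift d t) (shift u t))"
  proof
    fix n
    obtain y where "Linf {-r..<real (Suc n)} UNIV y" "\<forall>s<0. y s = x0 s"
      "AE t in lebesgue. t \<in> {0..<real (Suc n)} \<longrightarrow> y t = f (shift y t) (shift d t) (shift u t)"
      by (rule local_existence[OF x0 dT uT[of "real (Suc n)"]]) auto
    then show "\<exists>y. Linf {-r..<real (Suc n)} UNIV y \<and> (\<forall>s<0. y s = x0 s) \<and>
      (AE t in lebesgue. t \<in> {0..<real (Suc n)} \<longrightarrow> y t = f (shift y t) (shift d t) (shift u t))"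
      by blast
  qed
  then obtain ys where "\<forall>n. Linf {-r..<real (Suc n)} UNIV (ys n) \<and> (\<forall>s<0. ys n s = x0 s) \<and>
      (AE t in lebesgue. t \<in> {0..<real (Suc n)} \<longrightarrow> ys n t = f (shift (ys n) t) (shift d t) (shift u t))"
    by (rule choice[THEN exE])
  then have ys: "\<And>n. Linf {-r..<real (Suc n)} UNIV (ys n)" "\<And>n s. s < 0 \<Longrightarrow> ys n s = x0 s"
    "\<And>n. AE t in lebesgue. t \<in> {0..<real (Suc n)} \<longrightarrow> ys n t = f (shift (ys n) t) (shift d t) (shift u t)"
    by blast+
  \<comment> \<open>by uniqueness, the local solutions are restrictions of each other\<close>
  have "AE s in lebesgue. s \<in> {-r..<real (Suc n)} \<longrightarrow> ys m s = ys n s" if "n \<le> m" for n m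
  proof (rule solutions_unique[OF _ ys(1) dT uT])
    show "Linf {-r..<real (Suc n)} UNIV (ys m)"
      using that by (intro Linf_subset[OF ys(1)[of m]]) auto
    show "AE t in lebesgue. t \<in> {0..<real (Suc n)} \<longrightarrow> ys m t = f (shift (ys m) t) (shift d t) (shift u t)"
      using ys(3)[of m] by (rule eventually_mono) (use that in auto)
  qed (use ys in auto)
  with ys show thesis by (rule that)
qed

lemma global_existence:
  assumes x0: "Linf {-r..<0} UNIV x0" and d: "Linf {-r..} D d" and u: "Linf_loc (-r) U u"
  obtains x where "is_solution_inf r f x0 d u x"
proof -
  obtain ys where ys_Linf: "\<And>n. Linf {-r..<real (Suc n)} UNIV (ys n)" and ys_x0: "\<And>n s. s < 0 \<Longrightarrow> ys n s = x0 s"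
    and ys_sol: "\<And>n. AE t in lebesgue. t \<in> {0..<real (Suc n)} \<longrightarrow> ys n t = f (shift (ys n) t) (shift d t) (shift u t)"
    and agree: "\<And>n m. n \<le> m \<Longrightarrow> AE s in lebesgue. s \<in> {-r..<real (Suc n)} \<longrightarrow> ys m s = ys n s"
    by (rule local_solutions[OF x0 d u]) blast
  define x where "x s = lim (\<lambda>m. indicator {-r..<real (Suc m)} s *\<^sub>R ys m s)" for s
  have incseq: "incseq (\<lambda>n. {-r..<real (Suc n)})" by (auto simp: incseq_def)
  have x_eq: "AE s in lebesgue. \<forall>n. s \<in> {-r..<real (Suc n)} \<longrightarrow> x s = ys n s"
    unfolding x_def by (rule AE_lim_of_consistent[OF incseq agree])
  have "x \<in> borel_measurable lebesgue"
    unfolding x_def using ys_Linf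
    by (intro borel_measurable_lim_metric) (simp add: Linf_def set_borel_measurable_def)
  then have x_Linf: "Linf {-r..<real (Suc n)} UNIV x" for n
    using x_eq by (intro Linf_AE_eq[OF ys_Linf]) (auto elim!: eventually_mono)
  have "Linf_loc (-r) UNIV x"
    unfolding Linf_loc_def
  proof (intro allI impI)
    fix T assume "-r < T"
    have "{-r..T} \<subseteq> {-r..<real (Suc (nat \<lceil>T\<rceil>))}" by auto linarith
    then show "Linf {-r..T} UNIV x" by (intro Linf_subset[OF x_Linf]) auto
  qed
  moreover have "AE s in lebesgue. s \<in> {-r..<0} \<longrightarrow> x s = x0 s"
    using x_eq by (rule eventually_mono) (auto simp: ys_x0)
  moreover have sol: "x t = f (shift x t) (shift d t) (shift u t)"
    if "0 \<le> t" and "\<forall>n. t \<in> {-r..<real (Suc n)} \<longrightarrow> x t = ys n t"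
      and "\<forall>n. t \<in> {0..<real (Suc n)} \<longrightarrow> ys n t = f (shift (ys n) t) (shift d t) (shift u t)" for t
  proof -
    define n where "n = nat \<lceil>t\<rceil>"
    have t: "t \<in> {-r..<real (Suc n)}" "t \<in> {0..<real (Suc n)}" using \<open>0 \<le> t\<close> r_pos by (auto simp: n_def) linarith+
    have "x t = f (shift (ys n) t) (shift d t) (shift u t)" using that t by auto
    also have "\<dots> = f (shift x t) (shift d t) (shift u t)"
    proof (rule f_shift_cong[OF ys_Linf x_Linf _ _ _ t(2)])
      show "AE s in lebesgue. s \<in> {-r..<real (Suc n)} \<longrightarrow> ys n s = x s"
        using x_eq by (rule eventually_mono) auto
    qed (use d u r_pos in \<open>auto intro: Linf_subset simp: Linf_loc_def\<close>)
    finally show ?thesis .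
  qed
  have "AE t in lebesgue. \<forall>n. t \<in> {0..<real (Suc n)} \<longrightarrow>
      ys n t = f (shift (ys n) t) (shift d t) (shift u t)"
    using ys_sol by (subst AE_all_countable) auto
  with x_eq have "AE t in lebesgue. 0 \<le> t \<longrightarrow> x t = f (shift x t) (shift d t) (shift u t)"
    by eventually_elim (use sol in blast)
  ultimately show thesis by (intro that[of x]) (simp add: is_solution_inf_def)
qed

section \<open>The ISS estimate\<close>

lemma V_solution_decay:
  assumes d: "Linf {-r..} D d" and u: "Linf_loc (-r) U u"
    and sol: "is_solution_inf r f x0 d u x" and t: "0 \<le> t"
    and S: "0 \<le> S" "AE s in lebesgue. s \<in> {-r..<0} \<longrightarrow> V (x0 s) \<le> S"
    and \<Gamma>: "0 \<le> \<Gamma>" "\<And>s. s \<in> {0..t} \<Longrightarrow> \<gamma> (Lnorm {-r..0} (shift u s)) \<le> \<Gamma>"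
    and k: "real k * r \<le> t"
  shows "AE s in lebesgue. s \<in> {t-r..<t} \<longrightarrow> V (x s) \<le> lam^k * S + \<Gamma> / (1 - lam)"
proof -
  have x: "Linf {-r..t} UNIV x" and x0: "AE s in lebesgue. s \<in> {-r..<0} \<longrightarrow> x s = x0 s"
    and x_sol: "AE s in lebesgue. 0 \<le> s \<longrightarrow> x s = f (shift x s) (shift d s) (shift u s)"
    using sol r_pos t by (auto simp: is_solution_inf_def Linf_loc_def)
  have uT: "Linf {-r..t} U u" using u r_pos t by (simp add: Linf_loc_def)
  have bdd: "ess_bdd_above_on {-r..t} (\<lambda>s. V (x s))" by (rule ess_bdd_above_on_V[OF x])
  have "AE s in lebesgue. s \<in> {0..<t} \<longrightarrow>
      V (x s) \<le> lam * ess_sup_on {s-r..<s} (\<lambda>s. V (x s)) + \<Gamma>"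
    using x_sol
  proof (rule eventually_mono, intro impI)
    fix s assume "0 \<le> s \<longrightarrow> x s = f (shift x s) (shift d s) (shift u s)" and s: "s \<in> {0..<t}"
    then have "V (x s) = V (f (shift x s) (shift d s) (shift u s))" by simp
    also have "\<dots> \<le> lam * ess_sup_on {-r..<0} (\<lambda>\<sigma>. V (shift x s \<sigma>)) + \<gamma> (Lnorm {-r..0} (shift u s))"
      using s by (intro dissipation Linf_shift[OF x] Linf_shift[OF d] Linf_shift[OF uT]) auto
    also have "\<dots> \<le> lam * ess_sup_on {s-r..<s} (\<lambda>s. V (x s)) + \<Gamma>"
    proof (intro add_mono mult_left_mono)
      have "ess_bdd_above_on {s-r..<s} (\<lambda>s. V (x s))"
        using s by (intro ess_bdd_above_on_subset[OF bdd]) auto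
      then show "ess_sup_on {-r..<0} (\<lambda>\<sigma>. V (shift x s \<sigma>)) \<le> ess_sup_on {s-r..<s} (\<lambda>s. V (x s))"
        unfolding shift_def by (rule ess_sup_on_translate_le) auto
    qed (use \<Gamma>(2) s lam in auto)
    finally show "V (x s) \<le> lam * ess_sup_on {s-r..<s} (\<lambda>s. V (x s)) + \<Gamma>" .
  qed
  moreover have "AE s in lebesgue. s \<in> {-r..<0} \<longrightarrow> V (x s) \<le> S"
    using x0 S(2) by eventually_elim auto
  ultimately have decay: "ess_sup_on {real k * r - r..<t} (\<lambda>s. V (x s)) \<le> lam^k * S + \<Gamma> / (1 - lam)"
    using ess_sup_on_geometric_decay[OF r_pos _ lam(2) \<Gamma>(1) S(1) bdd] lam(1) by simp
  have "0 \<le> real k * r" using r_pos by simp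
  then have "{real k * r - r..<t} \<subseteq> {-r..t}" by auto
  from AE_le_ess_sup_on[OF ess_bdd_above_on_subset[OF bdd this]]
  show ?thesis by (rule eventually_mono) (use decay k in auto)
qed


definition iss_gain :: "(real \<Rightarrow> real) \<Rightarrow> bool" where
  "iss_gain g \<longleftrightarrow> continuous_on {0..} g \<and> nondecr_nonneg g \<and>
     (\<forall>c\<ge>0. sublevel_radius (2 * \<gamma> c / (1 - lam)) \<le> g c)"

lemma iss_gain_exists: obtains g where "iss_gain g"
proof -
  define \<rho> where "\<rho> c = sublevel_radius (2 * \<gamma> c / (1 - lam))" for c
  have "mono_on {0..} \<rho>"
  proof (rule mono_onI)
    fix a b :: real assume "a \<in> {0..}" "b \<in> {0..}" "a \<le> b"
    then show "\<rho> a \<le> \<rho> b"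
      unfolding \<rho>_def using lam \<gamma>_nonneg[of a] \<gamma>_le[of a b]
      by (intro sublevel_radius_mono divide_right_mono) auto
  qed
  moreover have "0 \<le> \<rho> c" if "0 \<le> c" for c
    using lam \<gamma>_nonneg[OF that] unfolding \<rho>_def by (intro sublevel_radius_nonneg) auto
  ultimately obtain g where "continuous_on {0..} g" "nondecr_nonneg g" "\<And>c. 0 \<le> c \<Longrightarrow> \<rho> c \<le> g c"
    using continuous_mono_majorant by metis
  then show thesis by (intro that[of g]) (simp add: iss_gain_def \<rho>_def)
qed

lemma input_norms_bounded:
  assumes u: "Linf_loc (-r) U u" and t: "0 \<le> t"
  shows "(\<lambda>s. Lnorm {-r..0} (shift u s)) ` {0..t} \<subseteq> {0..}"
    and "bdd_above ((\<lambda>s. Lnorm {-r..0} (shift u s)) ` {0..t})"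
proof -
  have uT: "Linf {-r..t} U u" using u r_pos t by (simp add: Linf_loc_def)
  obtain B where "0 \<le> B" and B: "AE s in lebesgue. s \<in> {-r..t} \<longrightarrow> u s \<in> U \<and> norm (u s) \<le> B"
    by (rule LinfE[OF uT])
  have "AE s in lebesgue. s \<in> {-r..t} \<longrightarrow> norm (u s) \<le> B" using B by (rule eventually_mono) auto
  then have "Lnorm {-r..0} (shift u s) \<le> B" if "s \<in> {0..t}" for s
    using that \<open>0 \<le> B\<close> by (intro Lnorm_shift_le[where S="{-r..t}"]) auto
  then show "bdd_above ((\<lambda>s. Lnorm {-r..0} (shift u s)) ` {0..t})" by (auto intro!: bdd_aboveI[of _ B])
  have "0 \<le> Lnorm {-r..0} (shift u s)" if "s \<in> {0..t}" for s
    using that by (intro Lnorm_nonneg[OF Linf_shift[OF uT]]) auto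
  then show "(\<lambda>s. Lnorm {-r..0} (shift u s)) ` {0..t} \<subseteq> {0..}" by auto
qed

lemma solution_estimate:
  assumes g: "iss_gain g" and d: "Linf {-r..} D d" and u: "Linf_loc (-r) U u"
    and sol: "is_solution_inf r f x0 d u x" and t: "0 \<le> t" and k: "real k * r \<le> t"
    and S: "0 \<le> S" "AE s in lebesgue. s \<in> {-r..<0} \<longrightarrow> V (x0 s) \<le> S"
  shows "Lnorm {-r..<0} (shift x t) - (SUP s\<in>{0..t}. g (Lnorm {-r..0} (shift u s))) \<le> sublevel_radius (2 * lam^k * S)"
proof -
  define unorm where "unorm s = Lnorm {-r..0} (shift u s)" for s
  define umax where "umax = Sup (unorm ` {0..t})"
  have unorm: "unorm ` {0..t} \<subseteq> {0..}" "unorm ` {0..t} \<noteq> {}" "bdd_above (unorm ` {0..t})"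
    using input_norms_bounded[OF u t] t unfolding unorm_def by auto
  then have unorm_le: "unorm s \<le> umax" if "s \<in> {0..t}" for s
    unfolding umax_def using that by (intro cSup_upper) auto
  then have "0 \<le> umax" using unorm(1) t by force
  moreover have "\<gamma> (unorm s) \<le> \<gamma> umax" if "s \<in> {0..t}" for s
    using unorm_le[OF that] unorm(1) that by (intro \<gamma>_le) (auto simp: image_subset_iff)
  ultimately have "0 \<le> \<gamma> umax" "\<And>s. s \<in> {0..t} \<Longrightarrow> \<gamma> (unorm s) \<le> \<gamma> umax"
    by (auto intro: \<gamma>_nonneg)
  from V_solution_decay[OF d u sol t S this[unfolded unorm_def] k]
  have "AE \<sigma> in lebesgue. \<sigma> \<in> {-r..<0} \<longrightarrow> V (shift x t \<sigma>) \<le> lam^k * S + \<gamma> umax / (1 - lam)"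
    by (rule AE_shift) auto
  then have "AE \<sigma> in lebesgue. \<sigma> \<in> {-r..<0} \<longrightarrow>
      norm (shift x t \<sigma>) \<le> sublevel_radius (lam^k * S + \<gamma> umax / (1 - lam))"
    by (rule eventually_mono) (auto intro: norm_le_sublevel_radius)
  then have "Lnorm {-r..<0} (shift x t) \<le> sublevel_radius (lam^k * S + \<gamma> umax / (1 - lam))"
    using S lam \<open>0 \<le> \<gamma> umax\<close> by (intro Lnorm_le sublevel_radius_nonneg) auto
  also have "\<dots> \<le> sublevel_radius (2 * (lam^k * S)) + sublevel_radius (2 * (\<gamma> umax / (1 - lam)))"
    using S lam \<open>0 \<le> \<gamma> umax\<close>
    by (intro mono_on_add_le) (auto simp: mono_on_def intro: sublevel_radius_mono sublevel_radius_nonneg)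
  also have "sublevel_radius (2 * (\<gamma> umax / (1 - lam))) \<le> g umax"
    using g \<open>0 \<le> umax\<close> by (simp add: iss_gain_def)
  also have "g umax = (SUP s\<in>{0..t}. g (unorm s))"
    using g continuous_on_mono_on_Sup[of g, OF _ _ unorm]
    by (simp add: iss_gain_def umax_def image_image nondecr_nonneg_def)
  finally show ?thesis by (simp add: unorm_def mult.assoc)
qed

lemma deviation_le:
  assumes g: "iss_gain g" and x0: "Linf {-r..<0} UNIV x0" and d: "Linf {-r..} D d"
    and u: "Linf_loc (-r) U u" and sol: "is_solution_inf r f x0 d u x" and t: "0 \<le> t" "real k * r \<le> t"
    and x0_R: "Lnorm {-r..<0} x0 \<le> R" and \<alpha>: "0 \<le> \<alpha>" "\<And>z. norm z \<le> R \<Longrightarrow> V z \<le> \<alpha>"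
  shows "Lnorm {-r..<0} (shift x t) - (SUP s\<in>{0..t}. g (Lnorm {-r..0} (shift u s))) \<le> sublevel_radius (2 * lam^k * \<alpha>)"
proof (rule solution_estimate[OF g d u sol t \<alpha>(1)])
  show "AE s in lebesgue. s \<in> {-r..<0} \<longrightarrow> V (x0 s) \<le> \<alpha>"
    using AE_norm_le_Lnorm[OF x0] by (rule eventually_mono) (use x0_R \<alpha>(2) in force)
qed

lemma ISS_bounded:
  assumes "iss_gain g"
  shows "\<exists>C. \<forall>x0 d u x t. (Linf {-r..<0} UNIV x0 \<and> Linf {-r..} D d \<and> Linf_loc (-r) U u) \<and>
      is_solution_inf r f x0 d u x \<and> Lnorm {-r..<0} x0 \<le> \<epsilon> \<and> 0 \<le> t \<longrightarrow>
      Lnorm {-r..<0} (shift x t) - (SUP s\<in>{0..t}. g (Lnorm {-r..0} (shift u s))) \<le> C"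
proof -
  obtain \<alpha> where \<alpha>: "0 \<le> \<alpha>" "\<And>z. norm z \<le> \<epsilon> \<Longrightarrow> V z \<le> \<alpha>" by (rule bounded_on_cball) blast
  show ?thesis
    using deviation_le[OF assms, where k=0 and R=\<epsilon> and \<alpha>=\<alpha>] \<alpha>
    by (intro exI[of _ "sublevel_radius (2 * \<alpha>)"] allI impI) auto
qed

lemma ISS_stable:
  assumes "iss_gain g" and \<epsilon>: "0 < \<epsilon>"
  shows "\<exists>\<delta>>0. \<exists>c<\<epsilon>. \<forall>x0 d u x t. (Linf {-r..<0} UNIV x0 \<and> Linf {-r..} D d \<and> Linf_loc (-r) U u) \<and>
      is_solution_inf r f x0 d u x \<and> Lnorm {-r..<0} x0 \<le> \<delta> \<and> 0 \<le> t \<longrightarrow>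
      Lnorm {-r..<0} (shift x t) - (SUP s\<in>{0..t}. g (Lnorm {-r..0} (shift u s))) \<le> c"
proof -
  obtain \<eta> where "0 < \<eta>" "sublevel_radius \<eta> < \<epsilon>" using sublevel_radius_small[OF \<epsilon>] .
  moreover obtain \<delta> where "0 < \<delta>" "\<And>z. norm z \<le> \<delta> \<Longrightarrow> V z \<le> \<eta> / 2"
    using small_near_zero[of "\<eta> / 2"] \<open>0 < \<eta>\<close> by auto
  ultimately show ?thesis
    using deviation_le[OF assms(1), where k=0 and R=\<delta> and \<alpha>="\<eta> / 2"]
    by (intro exI[of _ \<delta>] exI[of _ "sublevel_radius \<eta>"] conjI allI impI) auto
qed

lemma ISS_attractive:
  assumes g: "iss_gain g" and \<epsilon>: "0 < \<epsilon>"
  shows "\<exists>\<tau>>0. \<exists>c<\<epsilon>. \<forall>x0 d u x t. (Linf {-r..<0} UNIV x0 \<and> Linf {-r..} D d \<and> Linf_loc (-r) U u) \<and>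
      is_solution_inf r f x0 d u x \<and> Lnorm {-r..<0} x0 \<le> R \<and> \<tau> \<le> t \<longrightarrow>
      Lnorm {-r..<0} (shift x t) - (SUP s\<in>{0..t}. g (Lnorm {-r..0} (shift u s))) \<le> c"
proof -
  obtain \<eta> where "0 < \<eta>" "sublevel_radius \<eta> < \<epsilon>" using sublevel_radius_small[OF \<epsilon>] .
  obtain \<alpha> where \<alpha>: "0 \<le> \<alpha>" "\<And>z. norm z \<le> R \<Longrightarrow> V z \<le> \<alpha>" by (rule bounded_on_cball) blast
  obtain K where "lam^K < \<eta> / (2 * \<alpha> + 1)"
    using real_arch_pow_inv[of "\<eta> / (2 * \<alpha> + 1)" lam] \<open>0 < \<eta>\<close> \<alpha> lam by auto
  then have K: "2 * lam^k * \<alpha> \<le> \<eta>" if "K \<le> k" for k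
  proof -
    have "lam^k \<le> lam^K" using that lam by (intro power_decreasing) auto
    then have "2 * lam^k * \<alpha> \<le> 2 * (\<eta> / (2 * \<alpha> + 1)) * \<alpha>"
      using \<open>lam^K < _\<close> \<alpha> by (intro mult_right_mono) auto
    also have "\<dots> \<le> \<eta>" using \<open>0 < \<eta>\<close> \<alpha> by (simp add: field_simps)
    finally show ?thesis .
  qed
  \<comment> \<open>after K delays the contribution of the initial history is below \<eta>\<close>
  have decay: "Lnorm {-r..<0} (shift x t) - (SUP s\<in>{0..t}. g (Lnorm {-r..0} (shift u s))) \<le> sublevel_radius \<eta>"
    if "Linf {-r..<0} UNIV x0" "Linf {-r..} D d" "Linf_loc (-r) U u" "is_solution_inf r f x0 d u x"
      "Lnorm {-r..<0} x0 \<le> R" "real (Suc K) * r \<le> t" for x0 d u x t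
  proof -
    define k where "k = nat \<lfloor>t / r\<rfloor>"
    have "0 \<le> real (Suc K) * r" using r_pos by simp
    then have "0 \<le> t" using that(6) by linarith
    have "real (Suc K) \<le> t / r" using that(6) r_pos by (simp add: pos_le_divide_eq)
    then have "K \<le> k" unfolding k_def by linarith
    have "real k \<le> t / r" unfolding k_def using \<open>0 \<le> t\<close> r_pos by simp
    then have "real k * r \<le> t" using r_pos by (simp add: pos_le_divide_eq)
    have "Lnorm {-r..<0} (shift x t) - (SUP s\<in>{0..t}. g (Lnorm {-r..0} (shift u s))) \<le> sublevel_radius (2 * lam^k * \<alpha>)"
      by (rule deviation_le[OF g that(1-4) \<open>0 \<le> t\<close> \<open>real k * r \<le> t\<close> that(5) \<alpha>])
    also have "\<dots> \<le> sublevel_radius \<eta>"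
      using K[OF \<open>K \<le> k\<close>] \<alpha> lam by (intro sublevel_radius_mono) auto
    finally show ?thesis .
  qed
  show ?thesis
  proof (rule exI[of _ "real (Suc K) * r"], intro conjI)
    show "0 < real (Suc K) * r" using r_pos by simp
  qed (use decay \<open>sublevel_radius \<eta> < \<epsilon>\<close> in \<open>auto intro!: exI[of _ "sublevel_radius \<eta>"]\<close>)
qed

lemma ISS: "ISS r f D U"
proof -
  obtain g where g: "iss_gain g" by (rule iss_gain_exists)
  show ?thesis
    unfolding ISS_def Let_def
  proof (intro conjI exI[of _ g] allI impI)
    fix x0 :: "real \<Rightarrow> 'a" and d :: "real \<Rightarrow> 'd" and u :: "real \<Rightarrow> 'u"
    assume "Linf {-r..<0} UNIV x0 \<and> Linf {-r..} D d \<and> Linf_loc (-r) U u"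
    then show "\<exists>x. is_solution_inf r f x0 d u x" by (meson global_existence)
  qed (use g[unfolded iss_gain_def] ISS_bounded[OF g] ISS_stable[OF g] ISS_attractive[OF g] in blast)+
qed

end

theorem theorem2p6:
  fixes r :: real
    and D :: "(real ^ 'm1) set" and U :: "(real ^ 'm2) set"
    and f :: "(real \<Rightarrow> real ^ 'n) \<Rightarrow> (real \<Rightarrow> real ^ 'm1) \<Rightarrow> (real \<Rightarrow> real ^ 'm2) \<Rightarrow> real ^ 'n"
    and V :: "real ^ 'n \<Rightarrow> real" and \<gamma> :: "real \<Rightarrow> real" and lam :: real
  assumes r_pos: "r > 0"
    and D_compact: "compact D"
    and U_lc: "locally compact U" and U_0: "0 \<in> U"
    and f_welldef: "\<And>x x' d d' u u'. Linf {-r..<0} UNIV x \<Longrightarrow> Linf {-r..<0} UNIV x' \<Longrightarrow>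
        Linf {-r..0} D d \<Longrightarrow> Linf {-r..0} D d' \<Longrightarrow> Linf {-r..0} U u \<Longrightarrow> Linf {-r..0} U u' \<Longrightarrow>
        (AE s in lebesgue. s \<in> {-r..<0} \<longrightarrow> x s = x' s) \<Longrightarrow>
        (AE s in lebesgue. s \<in> {-r..0} \<longrightarrow> d s = d' s) \<Longrightarrow>
        (AE s in lebesgue. s \<in> {-r..0} \<longrightarrow> u s = u' s) \<Longrightarrow> f x d u = f x' d' u'"
    and H1: "\<exists>a M N. nondecr_nonneg a \<and> nondecr_nonneg M \<and> nondecr_nonneg N \<and>
        (\<forall>R>0. \<forall>x y d u. Linf {-r..<0} UNIV x \<and> Linf {-r..<0} UNIV y \<and>
            Linf {-r..0} D d \<and> Linf {-r..0} U u \<and>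
            Lnorm {-r..<0} x \<le> R \<and> Lnorm {-r..<0} y \<le> R \<and>
            Lnorm {-r..0} (\<lambda>s. (d s, u s)) \<le> R \<longrightarrow>
          (\<forall>h\<in>{0<..<r}. norm (f x d u - f y d u) \<le>
              N R * h * Lnorm {-h..<0} (\<lambda>s. x s - y s) + M R * Lnorm {-r..<-h} (\<lambda>s. x s - y s)) \<and>
          norm (f x d u) \<le> a R)"
    and H2: "\<And>\<delta> x d u. \<delta> > 0 \<Longrightarrow> Linf {-r..<\<delta>} UNIV x \<Longrightarrow> Linf {-r..\<delta>} D d \<Longrightarrow> Linf {-r..\<delta>} U u \<Longrightarrow>
        Linf {-r..<\<delta>} UNIV (\<lambda>t. if t < 0 then x t else f (shift x t) (shift d t) (shift u t))"
    and H3: "\<exists>b. Kinf b \<and> (\<forall>x d u. Linf {-r..<0} UNIV x \<and> Linf {-r..0} D d \<and> Linf {-r..0} U u \<longrightarrow>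
        norm (f x d u) \<le> b (max (Lnorm {-r..<0} x) (Lnorm {-r..0} u)))"
    and V_cont: "continuous_on UNIV V"
    and V_nonneg: "\<And>z. V z \<ge> 0"
    and V_posdef: "V 0 = 0" "\<And>z. z \<noteq> 0 \<Longrightarrow> V z > 0"
    and V_radunb: "filterlim V at_top at_infinity"
    and \<gamma>_cont: "continuous_on {0..} \<gamma>" and \<gamma>_mono: "nondecr_nonneg \<gamma>"
    and lam_range: "0 < lam" "lam < 1"
    and dissip: "\<And>x d u. Linf {-r..<0} UNIV x \<Longrightarrow> Linf {-r..0} D d \<Longrightarrow> Linf {-r..0} U u \<Longrightarrow>
        V (f x d u) \<le> lam * ess_sup_on {-r..<0} (\<lambda>s. V (x s)) + \<gamma> (Lnorm {-r..0} u)"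
  shows "ISS r f D U"
proof -
  obtain a M N where MN: "nondecr_nonneg M" "nondecr_nonneg N"
    and lip: "\<forall>R>0. \<forall>x y d u. Linf {-r..<0} UNIV x \<and> Linf {-r..<0} UNIV y \<and>
            Linf {-r..0} D d \<and> Linf {-r..0} U u \<and>
            Lnorm {-r..<0} x \<le> R \<and> Lnorm {-r..<0} y \<le> R \<and>
            Lnorm {-r..0} (\<lambda>s. (d s, u s)) \<le> R \<longrightarrow>
          (\<forall>h\<in>{0<..<r}. norm (f x d u - f y d u) \<le>
              N R * h * Lnorm {-h..<0} (\<lambda>s. x s - y s) + M R * Lnorm {-r..<-h} (\<lambda>s. x s - y s)) \<and>
          norm (f x d u) \<le> a R"
    using H1 by blast
  interpret dissipative_delay_system r D U f M N V \<gamma> lam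
  proof unfold_locales
    show "\<And>R. 0 < R \<Longrightarrow> 0 \<le> M R" "\<And>R. 0 < R \<Longrightarrow> 0 \<le> N R"
      using MN by (auto simp: nondecr_nonneg_def)
  qed (use r_pos f_welldef lip H2 V_cont V_posdef V_radunb \<gamma>_mono lam_range dissip in blast)+
  show ?thesis by (rule ISS)
qed

end
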